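(* Consider the following setting. $\mathcal{X}\subseteq\mathbb{R}^d$ is a nonempty compact convex set; $F:\mathbb{R}^d\times\Omega\to\mathbb{R}$ is measurable and $f(x)=\mathbb{E}[F(x,\zeta)]$, with $\mathbb{E}[(F(x,\zeta)-f(x))^2]\le K$ for all $x$; $f$ is $L$-Lipschitz and Clarke regular. Fix $\lambda>0$, $x_0\in\mathcal{X}$, $y_0\in\mathbb{R}^d$, and step sizes satisfying: $\alpha(0),\beta(0)<1$; $\alpha(n)>\alpha(n+1)$, $\beta(n)>\beta(n+1)$ for all $n$; $\sum_n\alpha(n)=\sum_n\beta(n)=\infty$; $\sum_n(\alpha(n)^2+\beta(n)^2)<\infty$; $\alpha(n)/\beta(n)\to0$. Let $U_n\sim\mathcal{N}(0,I_d)$ be independent, and $\zeta^1_n,\zeta^2_n$ samples with $F(x_n\pm\lambda U_n,\zeta_n^{1,2})=f(x_n\pm\lambda U_n)+N^{1,2}_{n+1}$, $(N^i_n)$ martingale differences w.r.t. $\mathcal{G}_n=\sigma(x_m,U_m,\ m\le n;\ \zeta^1_m,\zeta^2_m,\ m<n)$ with $\mathbb{E}[(N^i_{n+1})^2\mid\mathcal{G}_n]\le K$, $U_n$ independent of $\sigma(x_m,\ m\le n;\ U_m,\zeta^1_m,\zeta^2_m,\ m<n)$. Let $\tilde g(n)=\frac{F(x_n+\lambda U_n,\zeta_n^1)-F(x_n-\lambda U_n,\zeta_n^2)}{2\lambda}U_n$, $y_{n+1}=y_n+\beta(n)(\tilde g(n)-y_n)$, $x_{n+1}=\mathcal{P}_{\mathcal{X}}(x_n-\alpha(n)y_n)$,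 $\mathcal{F}_n=\sigma(x_k:1\le k\le n)$, and $M_{n+1}=\tilde g(n)-\mathbb{E}[\tilde g(n)\mid\mathcal{F}_n]$. Then for every $T>0$, almost surely, $$\lim_{n\to\infty}\ \sup_{n\le k\le\tau^1(n,T)}\Big\|\sum_{m=n}^{k}\alpha(m)M_{m+1}\Big\|=0,\qquad\text{where }\ \tau^1(n,T)=\min\Big\{m\ge n:\ \sum_{k=n}^{m+1}\alpha(k)\ge T\Big\}.$$
   Context: $\mathcal{P}_{\mathcal{X}}$ is the Euclidean projection onto $\mathcal{X}$. Clarke regularity of $f$ means the one-sided directional derivative $f'(x;v)=\lim_{t\downarrow0}(f(x+tv)-f(x))/t$ exists for all $x,v\in\mathbb{R}^d$. *)

theory Defs
  imports "HOL-Probability.Probability"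
begin

definition clarke_regular :: "('d::real_normed_vector \<Rightarrow> real) \<Rightarrow> bool" where
  "clarke_regular f \<longleftrightarrow>
     (\<forall>x v. \<exists>l. ((\<lambda>t. (f (x + t *\<^sub>R v) - f x) / t) \<longlongrightarrow> l) (at_right 0))"

definition gen_sets :: "'a measure \<Rightarrow> ('a \<Rightarrow> 'b) \<Rightarrow> 'b measure \<Rightarrow> 'a set set" where
  "gen_sets M X N = {X -` A \<inter> space M | A. A \<in> sets N}"

definition tau1 :: "(nat \<Rightarrow> real) \<Rightarrow> nat \<Rightarrow> real \<Rightarrow> nat" where
  "tau1 \<alpha> n T = (LEAST m. n \<le> m \<and> (\<Sum>k=n..m+1. \<alpha> k) \<ge> T)"

definition std_gauss_density :: "real^'d \<Rightarrow> ennreal" where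
  "std_gauss_density v = (\<Prod>i\<in>UNIV. ennreal (std_normal_density (v $ i)))"

end

(*
  The increments alpha(m) M_(m+1) are orthogonal in L^2 to every square-integrable function of
  the history H_m = sigma(x_k, k <= m; U_k, zeta1_k, zeta2_k, k < m), which contains F_m.
  Indeed E[g(m) | H_m] = h(x_m) for the Gaussian-smoothed gradient
  h(v) = E[(f(v + lam U) - f(v - lam U)) / (2 lam) U]: the noise terms drop out because they are
  martingale differences for G_m, which contains H_m and U_m, and U_m is standard Gaussian and
  independent of H_m. Hence M_(m+1) = g(m) - h(x_m) almost surely, and its second moment is
  bounded uniformly in m (f is Lipschitz, the noise has conditional variance at most K, and
  Gaussian moments are finite). As sum alpha(m)^2 < infinity, Kolmogorov's maximal inequality for
  orthogonal increments makes the partial sums a.s. Cauchy, so the sums over the windows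
  [n, tau1(n, T)] tend to zero; tau1(n, T) >= n because sum alpha(m) diverges.
*)

theory Submission
  imports Defs
begin

lemma norm_add_sq_le: "(norm (a + b))\<^sup>2 \<le> 2 * (norm a)\<^sup>2 + 2 * (norm (b :: 'b::real_normed_vector))\<^sup>2"
proof -
  have "(norm (a + b))\<^sup>2 \<le> (norm a + norm b)\<^sup>2"
    by (simp add: norm_triangle_ineq power_mono)
  also have "\<dots> \<le> 2 * (norm a)\<^sup>2 + 2 * (norm b)\<^sup>2"
    using sum_squares_ge_zero[of "norm a - norm b" 0] by (simp add: power2_eq_square algebra_simps)
  finally show ?thesis .
qed

lemma integrable_norm_sq_add:
  fixes f g :: "'a \<Rightarrow> 'b::{real_normed_vector, second_countable_topology}"
  assumes [measurable]: "f \<in> borel_measurable M" "g \<in> borel_measurable M"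
    and "integrable M (\<lambda>\<omega>. (norm (f \<omega>))\<^sup>2)" "integrable M (\<lambda>\<omega>. (norm (g \<omega>))\<^sup>2)"
  shows "integrable M (\<lambda>\<omega>. (norm (f \<omega> + g \<omega>))\<^sup>2)"
  by (rule Bochner_Integration.integrable_bound[where f = "\<lambda>\<omega>. 2 * (norm (f \<omega>))\<^sup>2 + 2 * (norm (g \<omega>))\<^sup>2"])
     (use assms norm_add_sq_le in auto)

lemma integrable_inner_of_norm_sq:
  fixes f g :: "'a \<Rightarrow> 'b::{real_inner, second_countable_topology}"
  assumes [measurable]: "f \<in> borel_measurable M" "g \<in> borel_measurable M"
    and "integrable M (\<lambda>\<omega>. (norm (f \<omega>))\<^sup>2)" "integrable M (\<lambda>\<omega>. (norm (g \<omega>))\<^sup>2)"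
  shows "integrable M (\<lambda>\<omega>. inner (f \<omega>) (g \<omega>))"
proof (rule Bochner_Integration.integrable_bound[where f = "\<lambda>\<omega>. (norm (f \<omega>))\<^sup>2 + (norm (g \<omega>))\<^sup>2"])
  have "\<bar>inner a b\<bar> \<le> (norm a)\<^sup>2 + (norm b)\<^sup>2" for a b :: 'b
    using Cauchy_Schwarz_ineq2[of a b] sum_squares_ge_zero[of "norm a - norm b" 0]
      mult_nonneg_nonneg[OF norm_ge_zero norm_ge_zero, of a b]
    by (simp add: power2_eq_square algebra_simps)
  then show "AE \<omega> in M. norm (inner (f \<omega>) (g \<omega>)) \<le> norm ((norm (f \<omega>))\<^sup>2 + (norm (g \<omega>))\<^sup>2)"
    by auto
qed (use assms in auto)

lemma integrable_mult_of_sq: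
  fixes f g :: "'a \<Rightarrow> real"
  assumes "f \<in> borel_measurable M" "g \<in> borel_measurable M"
    and "integrable M (\<lambda>\<omega>. (f \<omega>)\<^sup>2)" "integrable M (\<lambda>\<omega>. (g \<omega>)\<^sup>2)"
  shows "integrable M (\<lambda>\<omega>. f \<omega> * g \<omega>)"
  using integrable_inner_of_norm_sq[of f M g] assms by simp

lemma sq_sum4_le: "(p + q + r + s)\<^sup>2 \<le> 4 * (p\<^sup>2 + q\<^sup>2 + r\<^sup>2 + (s::real)\<^sup>2)"
proof -
  have "4 * (p\<^sup>2 + q\<^sup>2 + r\<^sup>2 + s\<^sup>2) - (p + q + r + s)\<^sup>2 =
      (p - q)\<^sup>2 + (p - r)\<^sup>2 + (p - s)\<^sup>2 + (q - r)\<^sup>2 + (q - s)\<^sup>2 + (r - s)\<^sup>2"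
    by (simp add: power2_eq_square algebra_simps)
  moreover have "0 \<le> (p - q)\<^sup>2 + (p - r)\<^sup>2 + (p - s)\<^sup>2 + (q - r)\<^sup>2 + (q - s)\<^sup>2 + (r - s)\<^sup>2"
    by simp
  ultimately show ?thesis by linarith
qed

section \<open>Orthogonal increments and Kolmogorov's inequality\<close>

lemma Cauchy_if_anchored:
  fixes s :: "nat \<Rightarrow> 'b::real_normed_vector"
  assumes "\<And>r. \<exists>n. \<forall>i\<ge>n. norm (s i - s n) < inverse (real (Suc r))"
  shows "Cauchy s"
proof (rule CauchyI)
  fix \<delta> :: real assume "0 < \<delta>"
  then obtain r where r: "inverse (real (Suc r)) < \<delta> / 2"
    using reals_Archimedean[of "\<delta> / 2"] by auto
  obtain n where n: "\<forall>i\<ge>n. norm (s i - s n) < inverse (real (Suc r))"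
    using assms by blast
  have "norm (s i - s j) < \<delta>" if "n \<le> i" "n \<le> j" for i j
  proof -
    have "norm (s i - s j) \<le> norm (s i - s n) + norm (s j - s n)"
      using norm_triangle_ineq4[of "s i - s n" "s j - s n"] by simp
    with n[rule_format, OF that(1)] n[rule_format, OF that(2)] r show ?thesis by linarith
  qed
  then show "\<exists>N. \<forall>i\<ge>N. \<forall>j\<ge>N. norm (s i - s j) < \<delta>" by blast
qed

locale orthogonal_increments = prob_space +
  fixes D :: "nat \<Rightarrow> 'a \<Rightarrow> 'b::euclidean_space" and H :: "nat \<Rightarrow> 'a measure"
  assumes subalgebra_H: "\<And>j. subalgebra M (H j)"
    and D_adapted: "\<And>m j. m < j \<Longrightarrow> D m \<in> borel_measurable (H j)"
    and D_square_integrable: "\<And>m. integrable M (\<lambda>\<omega>. (norm (D m \<omega>))\<^sup>2)"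
    and D_orthogonal: "\<And>j Z. Z \<in> borel_measurable (H j) \<Longrightarrow> integrable M (\<lambda>\<omega>. (norm (Z \<omega>))\<^sup>2) \<Longrightarrow>
        (\<integral>\<omega>. inner (Z \<omega>) (D j \<omega>) \<partial>M) = 0"
begin

definition psum :: "nat \<Rightarrow> 'a \<Rightarrow> 'b" where
  "psum k \<omega> = (\<Sum>m<k. D m \<omega>)"

lemma D_measurable[measurable]: "D m \<in> borel_measurable M"
  using measurable_from_subalg[OF subalgebra_H D_adapted[OF lessI]] .

lemma psum_adapted: "k \<le> j \<Longrightarrow> psum k \<in> borel_measurable (H j)"
  unfolding psum_def by (intro borel_measurable_sum) (auto intro: D_adapted)

lemma psum_measurable[measurable]: "psum k \<in> borel_measurable M"
  unfolding psum_def by measurable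

lemma integrable_norm_sq_psum_diff: "integrable M (\<lambda>\<omega>. (norm (psum k \<omega> - psum n \<omega>))\<^sup>2)"
proof -
  have psum_sq: "integrable M (\<lambda>\<omega>. (norm (psum k \<omega>))\<^sup>2)" for k
  proof (induction k)
    case (Suc k)
    then show ?case
      using integrable_norm_sq_add[OF psum_measurable D_measurable Suc D_square_integrable]
      by (simp add: psum_def)
  qed (simp add: psum_def)
  show ?thesis
    using integrable_norm_sq_add[of "psum k" M "\<lambda>\<omega>. - psum n \<omega>"] psum_sq by simp
qed

lemma integrable_indicator_norm_sq_psum_diff:
  "A \<in> sets M \<Longrightarrow> integrable M (\<lambda>\<omega>. indicator A \<omega> * (norm (psum k \<omega> - psum n \<omega>))\<^sup>2)"
  using integrable_real_mult_indicator[OF _ integrable_norm_sq_psum_diff] by (simp add: mult.commute)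

lemma integral_indicator_norm_sq_psum_Suc:
  assumes B: "B \<in> sets (H k)" and "n \<le> k"
  shows "(\<integral>\<omega>. indicator B \<omega> * (norm (psum (Suc k) \<omega> - psum n \<omega>))\<^sup>2 \<partial>M) =
    (\<integral>\<omega>. indicator B \<omega> * (norm (psum k \<omega> - psum n \<omega>))\<^sup>2 \<partial>M) + (\<integral>\<omega>. indicator B \<omega> * (norm (D k \<omega>))\<^sup>2 \<partial>M)"
proof -
  define Z where "Z \<omega> = indicator B \<omega> *\<^sub>R (psum k \<omega> - psum n \<omega>)" for \<omega>
  have BM: "B \<in> sets M" using B subalgebra_H by (auto simp: subalgebra_def)
  have "Z \<in> borel_measurable (H k)"
    unfolding Z_def using B psum_adapted[of k k] psum_adapted[OF \<open>n \<le> k\<close>] by measurable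
  moreover have Z_sq: "integrable M (\<lambda>\<omega>. (norm (Z \<omega>))\<^sup>2)"
    using integrable_indicator_norm_sq_psum_diff[OF BM, of k n]
    by (rule Bochner_Integration.integrable_cong[THEN iffD1, rotated -1])
       (auto simp: Z_def indicator_def)
  ultimately have orth: "(\<integral>\<omega>. inner (Z \<omega>) (D k \<omega>) \<partial>M) = 0"
    by (rule D_orthogonal)
  have [measurable]: "Z \<in> borel_measurable M" using BM unfolding Z_def by measurable
  have "integrable M (\<lambda>\<omega>. inner (Z \<omega>) (D k \<omega>))"
    by (rule integrable_inner_of_norm_sq[OF _ _ Z_sq D_square_integrable]) measurable
  moreover have "integrable M (\<lambda>\<omega>. indicator B \<omega> * (norm (D k \<omega>))\<^sup>2)"
    using integrable_real_mult_indicator[OF BM D_square_integrable] by (simp add: mult.commute)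
  moreover have "indicator B \<omega> * (norm (psum (Suc k) \<omega> - psum n \<omega>))\<^sup>2 =
      indicator B \<omega> * (norm (psum k \<omega> - psum n \<omega>))\<^sup>2 + 2 * inner (Z \<omega>) (D k \<omega>)
      + indicator B \<omega> * (norm (D k \<omega>))\<^sup>2" for \<omega>
    by (cases "\<omega> \<in> B")
       (simp_all add: Z_def psum_def power2_norm_eq_inner inner_add inner_diff inner_commute algebra_simps)
  ultimately show ?thesis
    using orth integrable_indicator_norm_sq_psum_diff[OF BM] by simp
qed

lemma integral_norm_sq_psum_diff:
  assumes "n \<le> k"
  shows "(\<integral>\<omega>. (norm (psum k \<omega> - psum n \<omega>))\<^sup>2 \<partial>M) = (\<Sum>m\<in>{n..<k}. \<integral>\<omega>. (norm (D m \<omega>))\<^sup>2 \<partial>M)"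
  using assms
proof (induction k rule: nat_induct_at_least)
  case (Suc k)
  have "space M \<in> sets (H k)"
    using subalgebra_H[of k] by (metis sets.top subalgebra_def)
  moreover have "(\<integral>\<omega>. indicator (space M) \<omega> * h \<omega> \<partial>M) = (\<integral>\<omega>. h \<omega> \<partial>M)" for h :: "'a \<Rightarrow> real"
    by (rule Bochner_Integration.integral_cong) auto
  ultimately show ?case
    using integral_indicator_norm_sq_psum_Suc[of "space M" k n] Suc by simp
qed simp

definition exceed_set :: "real \<Rightarrow> nat \<Rightarrow> nat \<Rightarrow> 'a set" where
  "exceed_set \<epsilon> n k = {\<omega>\<in>space M. \<exists>i\<in>{n..k}. \<epsilon> \<le> norm (psum i \<omega> - psum n \<omega>)}"

lemma exceed_set_sets: "exceed_set \<epsilon> n k \<in> sets M"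
  unfolding exceed_set_def by measurable

lemma exceed_set_adapted: "n \<le> k \<Longrightarrow> exceed_set \<epsilon> n k \<in> sets (H k)"
proof -
  assume "n \<le> k"
  have [measurable]: "psum i \<in> borel_measurable (H k)" if "i \<le> k" for i
    using psum_adapted that by simp
  have "exceed_set \<epsilon> n k = (\<Union>i\<in>{n..k}. {\<omega>\<in>space (H k). \<epsilon> \<le> norm (psum i \<omega> - psum n \<omega>)})"
    using subalgebra_H[of k] unfolding exceed_set_def subalgebra_def by auto
  also have "\<dots> \<in> sets (H k)"
    using \<open>n \<le> k\<close> by (intro sets.finite_UN) auto
  finally show ?thesis .
qed

text \<open>The set exceed_set \<epsilon> n k is known at time k, so by orthogonality the energy on it can only
  grow; on the part added at time k + 1 the threshold is exceeded.\<close>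
lemma prob_exceed_set_le:
  assumes "0 < \<epsilon>" "n \<le> k"
  shows "\<epsilon>\<^sup>2 * prob (exceed_set \<epsilon> n k)
    \<le> (\<integral>\<omega>. indicator (exceed_set \<epsilon> n k) \<omega> * (norm (psum k \<omega> - psum n \<omega>))\<^sup>2 \<partial>M)"
  using \<open>n \<le> k\<close>
proof (induction k rule: nat_induct_at_least)
  case base
  have "exceed_set \<epsilon> n n = {}" unfolding exceed_set_def using \<open>0 < \<epsilon>\<close> by auto
  then show ?case by simp
next
  case (Suc k)
  let ?B = "exceed_set \<epsilon> n k" and ?B' = "exceed_set \<epsilon> n (Suc k)"
  let ?E = "\<lambda>A. \<integral>\<omega>. indicator A \<omega> * (norm (psum (Suc k) \<omega> - psum n \<omega>))\<^sup>2 \<partial>M"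
  define C where "C = ?B' - ?B"
  have C_sets: "C \<in> sets M" unfolding C_def using exceed_set_sets by auto
  have "\<epsilon>\<^sup>2 * prob C = (\<integral>\<omega>. indicator C \<omega> * \<epsilon>\<^sup>2 \<partial>M)"
    using C_sets by simp
  also have "\<dots> \<le> ?E C"
  proof (rule integral_mono)
    show "integrable M (\<lambda>\<omega>. indicator C \<omega> * \<epsilon>\<^sup>2)"
      using C_sets by (simp add: emeasure_eq_measure)
    show "indicator C \<omega> * \<epsilon>\<^sup>2 \<le> indicator C \<omega> * (norm (psum (Suc k) \<omega> - psum n \<omega>))\<^sup>2" for \<omega>
      using Suc(1) \<open>0 < \<epsilon>\<close> unfolding C_def exceed_set_def
      by (auto split: split_indicator simp: le_Suc_eq intro!: power_mono)
  qed (rule integrable_indicator_norm_sq_psum_diff[OF C_sets])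
  finally have "\<epsilon>\<^sup>2 * prob C \<le> ?E C" .
  moreover have "(\<integral>\<omega>. indicator ?B \<omega> * (norm (psum k \<omega> - psum n \<omega>))\<^sup>2 \<partial>M) \<le> ?E ?B"
    using integral_indicator_norm_sq_psum_Suc[OF exceed_set_adapted[OF Suc(1)] Suc(1)] by simp
  moreover have "?B \<subseteq> ?B'" unfolding exceed_set_def by auto
  then have "prob ?B' = prob ?B + prob C"
    using exceed_set_sets C_sets unfolding C_def
    by (subst finite_measure_Union[symmetric]) (auto intro!: arg_cong[where f = prob])
  moreover have "?E ?B' = ?E ?B + ?E C"
  proof -
    have "indicator ?B' \<omega> = indicator ?B \<omega> + (indicator C \<omega> :: real)" for \<omega>
      using \<open>?B \<subseteq> ?B'\<close> unfolding C_def by (auto simp: indicator_def)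
    then show ?thesis
      using integrable_indicator_norm_sq_psum_diff[OF exceed_set_sets] integrable_indicator_norm_sq_psum_diff[OF C_sets]
      by (simp add: distrib_right)
  qed
  ultimately show ?case using Suc(2) by (simp add: distrib_left)
qed

lemma kolmogorov_inequality:
  assumes "0 < \<epsilon>" "n \<le> k"
  shows "\<epsilon>\<^sup>2 * prob (exceed_set \<epsilon> n k) \<le> (\<integral>\<omega>. (norm (psum k \<omega> - psum n \<omega>))\<^sup>2 \<partial>M)"
  using prob_exceed_set_le[OF assms] order_trans integral_mono[OF
      integrable_indicator_norm_sq_psum_diff[OF exceed_set_sets] integrable_norm_sq_psum_diff]
  by (fastforce split: split_indicator)

lemma prob_psum_oscillation_le:
  assumes summable: "summable (\<lambda>m. \<integral>\<omega>. (norm (D m \<omega>))\<^sup>2 \<partial>M)" and "0 < \<epsilon>"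
  shows "prob {\<omega>\<in>space M. \<exists>i\<ge>n. \<epsilon> \<le> norm (psum i \<omega> - psum n \<omega>)}
    \<le> ((\<Sum>m. \<integral>\<omega>. (norm (D m \<omega>))\<^sup>2 \<partial>M) - (\<Sum>m<n. \<integral>\<omega>. (norm (D m \<omega>))\<^sup>2 \<partial>M)) / \<epsilon>\<^sup>2"
proof -
  define e where "e = (\<lambda>m. \<integral>\<omega>. (norm (D m \<omega>))\<^sup>2 \<partial>M)"
  define B where "B k = exceed_set \<epsilon> n (n + k)" for k
  have B_sets: "B k \<in> sets M" for k unfolding B_def by (rule exceed_set_sets)
  have "prob (B k) \<le> (suminf e - (\<Sum>m<n. e m)) / \<epsilon>\<^sup>2" for k
  proof -
    have "(\<Sum>m<n. e m) + (\<Sum>m\<in>{n..<n + k}. e m) = (\<Sum>m<n + k. e m)"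
      by (metis atLeast0LessThan le_add1 sum.atLeastLessThan_concat zero_le)
    also have "\<dots> \<le> suminf e"
      using summable unfolding e_def by (intro sum_le_suminf) auto
    finally have "(\<Sum>m<n. e m) + (\<Sum>m\<in>{n..<n + k}. e m) \<le> suminf e" .
    then show ?thesis
      using kolmogorov_inequality[OF \<open>0 < \<epsilon>\<close>, of n "n + k"] integral_norm_sq_psum_diff[of n "n + k"] \<open>0 < \<epsilon>\<close>
      unfolding B_def e_def by (simp add: field_simps)
  qed
  moreover have "(\<lambda>k. prob (B k)) \<longlonglongrightarrow> prob (\<Union>k. B k)"
    using B_sets by (intro finite_Lim_measure_incseq) (auto simp: incseq_def B_def exceed_set_def)
  ultimately have "prob (\<Union>k. B k) \<le> (suminf e - (\<Sum>m<n. e m)) / \<epsilon>\<^sup>2"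
    by (intro LIMSEQ_le_const2) auto
  moreover have "(\<Union>k. B k) = {\<omega>\<in>space M. \<exists>i\<ge>n. \<epsilon> \<le> norm (psum i \<omega> - psum n \<omega>)}"
    unfolding B_def exceed_set_def
    by (auto intro!: bexI[where x = "_ - n"]) (metis add_diff_inverse_nat atLeastAtMost_iff le_refl not_le)
  ultimately show ?thesis unfolding e_def by simp
qed

lemma AE_Cauchy_psum:
  assumes summable: "summable (\<lambda>m. \<integral>\<omega>. (norm (D m \<omega>))\<^sup>2 \<partial>M)"
  shows "AE \<omega> in M. Cauchy (\<lambda>n. psum n \<omega>)"
proof -
  define e where "e = (\<lambda>m. \<integral>\<omega>. (norm (D m \<omega>))\<^sup>2 \<partial>M)"
  define Bad where "Bad r = {\<omega>\<in>space M. \<forall>n. \<exists>i\<ge>n. inverse (real (Suc r)) \<le> norm (psum i \<omega> - psum n \<omega>)}" for r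
  have "Bad r \<in> null_sets M" for r
  proof -
    have bound: "prob (Bad r) \<le> (suminf e - (\<Sum>m<n. e m)) / (inverse (real (Suc r)))\<^sup>2" for n
    proof -
      have "prob (Bad r) \<le> prob {\<omega>\<in>space M. \<exists>i\<ge>n. inverse (real (Suc r)) \<le> norm (psum i \<omega> - psum n \<omega>)}"
        by (rule finite_measure_mono) (auto simp: Bad_def)
      also have "\<dots> \<le> (suminf e - (\<Sum>m<n. e m)) / (inverse (real (Suc r)))\<^sup>2"
        using prob_psum_oscillation_le[OF summable, of "inverse (real (Suc r))" n] by (simp add: e_def)
      finally show ?thesis .
    qed
    have lim: "(\<lambda>n. (suminf e - (\<Sum>m<n. e m)) / (inverse (real (Suc r)))\<^sup>2) \<longlonglongrightarrow> (suminf e - suminf e) / (inverse (real (Suc r)))\<^sup>2"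
      using summable unfolding e_def by (intro tendsto_intros summable_LIMSEQ) auto
    have "prob (Bad r) \<le> (suminf e - suminf e) / (inverse (real (Suc r)))\<^sup>2"
      using lim by (rule LIMSEQ_le_const) (use bound in blast)
    moreover have "Bad r \<in> sets M" unfolding Bad_def by measurable
    ultimately show ?thesis
      by (simp add: null_sets_def emeasure_eq_measure measure_le_0_iff)
  qed
  then have "(\<Union>r. Bad r) \<in> null_sets M" by blast
  then show ?thesis
  proof (rule AE_I')
    show "{\<omega>\<in>space M. \<not> Cauchy (\<lambda>n. psum n \<omega>)} \<subseteq> (\<Union>r. Bad r)"
      unfolding Bad_def using Cauchy_if_anchored by (force simp: not_less)
  qed
qed

end

lemma sum_atLeastAtMost_eq_diff_lessThan:
  fixes d :: "nat \<Rightarrow> 'b::ab_group_add"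
  assumes "n \<le> Suc k"
  shows "(\<Sum>m=n..k. d m) = (\<Sum>m<Suc k. d m) - (\<Sum>m<n. d m)"
proof -
  have "(\<Sum>m<Suc k. d m) = (\<Sum>m<n. d m) + (\<Sum>m=n..<Suc k. d m)"
    using assms by (metis atLeast0LessThan sum.atLeastLessThan_concat zero_le)
  then show ?thesis by (simp add: atLeastLessThanSuc_atLeastAtMost)
qed

lemma Cauchy_imp_window_sums_LIMSEQ_0:
  fixes d :: "nat \<Rightarrow> 'b::real_normed_vector" and \<tau> :: "nat \<Rightarrow> nat"
  assumes "Cauchy (\<lambda>n. \<Sum>m<n. d m)" and "\<And>n. n \<le> \<tau> n"
  shows "(\<lambda>n. SUP k\<in>{n..\<tau> n}. norm (\<Sum>m=n..k. d m)) \<longlonglongrightarrow> 0"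
proof (rule LIMSEQ_I)
  fix r :: real assume "0 < r"
  then obtain N where N: "\<And>i j. N \<le> i \<Longrightarrow> N \<le> j \<Longrightarrow> norm ((\<Sum>m<i. d m) - (\<Sum>m<j. d m)) < r"
    using CauchyD[OF assms(1)] by meson
  have "norm (SUP k\<in>{n..\<tau> n}. norm (\<Sum>m=n..k. d m)) < r" if "N \<le> n" for n
  proof -
    have window: "norm (\<Sum>m=n..k. d m) < r" if "k \<in> {n..\<tau> n}" for k
      using N[of "Suc k" n] \<open>N \<le> n\<close> that by (simp add: sum_atLeastAtMost_eq_diff_lessThan)
    have "{n..\<tau> n} \<noteq> {}" using assms(2)[of n] by simp
    then have "0 \<le> (SUP k\<in>{n..\<tau> n}. norm (\<Sum>m=n..k. d m))"
      by (meson all_not_in_conv bdd_above_finite cSUP_upper2 finite_atLeastAtMost finite_imageI norm_ge_zero)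
    moreover have "(SUP k\<in>{n..\<tau> n}. norm (\<Sum>m=n..k. d m)) < r"
      using \<open>{n..\<tau> n} \<noteq> {}\<close> window by (subst finite_Sup_less_iff) auto
    ultimately show ?thesis by simp
  qed
  then show "\<exists>N. \<forall>n\<ge>N. norm ((SUP k\<in>{n..\<tau> n}. norm (\<Sum>m=n..k. d m)) - 0) < r"
    by auto
qed

lemma tau1_ge:
  assumes "filterlim (\<lambda>n. \<Sum>i<n. \<alpha> i) at_top sequentially"
  shows "n \<le> tau1 \<alpha> n T"
proof -
  obtain N where N: "\<And>m. N \<le> m \<Longrightarrow> T + (\<Sum>i<n. \<alpha> i) \<le> (\<Sum>i<m. \<alpha> i)"
    using assms unfolding filterlim_at_top eventually_sequentially by blast
  define m where "m = max n N"
  have "(\<Sum>k=n..m+1. \<alpha> k) = (\<Sum>k<Suc (m + 1). \<alpha> k) - (\<Sum>k<n. \<alpha> k)"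
    by (rule sum_atLeastAtMost_eq_diff_lessThan) (simp add: m_def)
  moreover have "T + (\<Sum>i<n. \<alpha> i) \<le> (\<Sum>k<Suc (m + 1). \<alpha> k)"
    by (rule N) (simp add: m_def)
  ultimately have "T \<le> (\<Sum>k=n..m+1. \<alpha> k)" by linarith
  then have "n \<le> m \<and> T \<le> (\<Sum>k=n..m+1. \<alpha> k)" by (simp add: m_def)
  then show ?thesis
    unfolding tau1_def by (rule LeastI2) simp
qed

section \<open>Measurability, independence and conditional expectation\<close>

lemma borel_measurable_vec_nth[measurable (raw)]:
  fixes h :: "'a \<Rightarrow> real^'n"
  shows "h \<in> borel_measurable N \<Longrightarrow> (\<lambda>\<omega>. h \<omega> $ i) \<in> borel_measurable N"
  using measurable_compose[OF _ borel_measurable_nth] .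

lemma component_sq_le_norm_sq: "(v $ i)\<^sup>2 \<le> (norm (v :: real^'n))\<^sup>2"
  using component_le_norm_cart[of v i] by (simp add: abs_le_square_iff[symmetric])

lemma borel_measurable_vec_lambda[measurable (raw)]:
  fixes c :: "'n::finite \<Rightarrow> 'a \<Rightarrow> real"
  assumes "\<And>i. c i \<in> borel_measurable N"
  shows "(\<lambda>\<omega>. \<chi> i. c i \<omega>) \<in> borel_measurable N"
  using assms by (subst borel_measurable_euclidean_space) (auto simp: Basis_vec_def inner_axis)

lemma gen_sets_subset_sets: "X \<in> measurable M N \<Longrightarrow> gen_sets M X N \<subseteq> sets M"
  by (auto simp: gen_sets_def measurable_sets)

lemma subalgebra_sigma:
  assumes "A \<subseteq> sets M" shows "subalgebra M (sigma (space M) A)"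
proof -
  have "A \<subseteq> Pow (space M)" using assms sets.sets_into_space by blast
  with assms show ?thesis
    by (simp add: subalgebra_def space_measure_of_conv sets_measure_of_conv sets.sigma_sets_subset)
qed

lemma subalgebra_sigma_mono:
  assumes "A \<subseteq> B" "B \<subseteq> sets M"
  shows "subalgebra (sigma (space M) B) (sigma (space M) A)"
proof -
  have "B \<subseteq> Pow (space M)" using assms(2) sets.sets_into_space by blast
  with assms(1) show ?thesis
    by (simp add: subalgebra_def space_measure_of_conv sets_measure_of_conv sigma_sets_mono')
qed

lemma measurable_sigma_gen_sets:
  assumes "X \<in> measurable M N" "gen_sets M X N \<subseteq> A" "A \<subseteq> sets M"
  shows "X \<in> measurable (sigma (space M) A) N"
proof -
  have "A \<subseteq> Pow (space M)" using assms(3) sets.sets_into_space by blast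
  with assms show ?thesis
    by (auto simp: measurable_def gen_sets_def space_measure_of_conv sets_measure_of_conv)
qed

lemma (in prob_space) indep_set_mono:
  "indep_set A B \<Longrightarrow> A' \<subseteq> A \<Longrightarrow> B' \<subseteq> B \<Longrightarrow> indep_set A' B'"
  unfolding indep_sets2_eq by blast

lemma (in prob_space) distr_pair_eq_pair_measure:
  assumes [measurable]: "U \<in> measurable M N" "W \<in> measurable M S"
    and indep: "indep_set (gen_sets M U N) (gen_sets M W S)"
  shows "distr M N U \<Otimes>\<^sub>M distr M S W = distr M (N \<Otimes>\<^sub>M S) (\<lambda>\<omega>. (U \<omega>, W \<omega>))"
proof (rule pair_measure_eqI)
  show "sigma_finite_measure (distr M N U)" "sigma_finite_measure (distr M S W)"
    by (simp_all add: prob_space_imp_sigma_finite prob_space_distr)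
  show "sets (distr M N U \<Otimes>\<^sub>M distr M S W) = sets (distr M (N \<Otimes>\<^sub>M S) (\<lambda>\<omega>. (U \<omega>, W \<omega>)))"
    unfolding sets_distr by (rule sets_pair_measure_cong) simp_all
next
  fix A B assume "A \<in> sets (distr M N U)" "B \<in> sets (distr M S W)"
  then have [measurable]: "A \<in> sets N" "B \<in> sets S" by simp_all
  have "emeasure (distr M (N \<Otimes>\<^sub>M S) (\<lambda>\<omega>. (U \<omega>, W \<omega>))) (A \<times> B) =
      emeasure M ((U -` A \<inter> space M) \<inter> (W -` B \<inter> space M))"
    by (subst emeasure_distr) (auto intro!: arg_cong[where f = "emeasure M"])
  also have "\<dots> = emeasure M (U -` A \<inter> space M) * emeasure M (W -` B \<inter> space M)"
  proof -
    have "U -` A \<inter> space M \<in> gen_sets M U N" "W -` B \<inter> space M \<in> gen_sets M W S"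
      by (auto simp: gen_sets_def)
    then have "prob ((U -` A \<inter> space M) \<inter> (W -` B \<inter> space M)) = prob (U -` A \<inter> space M) * prob (W -` B \<inter> space M)"
      by (rule indep_setD[OF indep])
    then show ?thesis by (simp add: emeasure_eq_measure ennreal_mult')
  qed
  finally show "emeasure (distr M N U) A * emeasure (distr M S W) B =
      emeasure (distr M (N \<Otimes>\<^sub>M S) (\<lambda>\<omega>. (U \<omega>, W \<omega>))) (A \<times> B)"
    by (simp add: emeasure_distr)
qed

lemma (in prob_space) integral_indep:
  fixes \<psi> :: "'b \<Rightarrow> 'c \<Rightarrow> real"
  assumes [measurable]: "U \<in> measurable M N" "W \<in> measurable M S"
    and indep: "indep_set (gen_sets M U N) (gen_sets M W S)"
    and [measurable]: "case_prod \<psi> \<in> borel_measurable (N \<Otimes>\<^sub>M S)"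
    and integrable: "integrable M (\<lambda>\<omega>. \<psi> (U \<omega>) (W \<omega>))"
  shows "(\<integral>\<omega>. \<psi> (U \<omega>) (W \<omega>) \<partial>M) = (\<integral>\<omega>. (\<integral>u. \<psi> u (W \<omega>) \<partial>distr M N U) \<partial>M)"
proof -
  note product = distr_pair_eq_pair_measure[OF assms(1-3)]
  interpret pair_sigma_finite "distr M N U" "distr M S W"
    by (intro pair_sigma_finite.intro prob_space_imp_sigma_finite prob_space_distr) simp_all
  have [measurable]: "(\<lambda>w. \<integral>u. \<psi> u w \<partial>distr M N U) \<in> borel_measurable S"
    using M1.borel_measurable_lebesgue_integral[of "\<lambda>w u. \<psi> u w" S]
    by (simp add: measurable_split_conv cong: measurable_cong_sets)
  have "integrable (distr M N U \<Otimes>\<^sub>M distr M S W) (case_prod \<psi>)"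
    using integrable unfolding product by (subst integrable_distr_eq) auto
  then have "(\<integral>w. (\<integral>u. \<psi> u w \<partial>distr M N U) \<partial>distr M S W) = integral\<^sup>L (distr M N U \<Otimes>\<^sub>M distr M S W) (case_prod \<psi>)"
    by (rule integral_snd)
  also have "\<dots> = (\<integral>\<omega>. \<psi> (U \<omega>) (W \<omega>) \<partial>M)"
    unfolding product by (subst integral_distr) auto
  finally show ?thesis
    by (simp add: integral_distr)
qed

lemma (in prob_space) sigma_finite_subalgebra_if_subalgebra:
  "subalgebra M G \<Longrightarrow> sigma_finite_subalgebra M G"
  by (rule finite_measure_subalgebra_is_sigma_finite)
     (simp add: finite_measure_subalgebra_def finite_measure_subalgebra_axioms_def finite_measure_axioms)

lemma (in prob_space) cond_exp_bounded_imp_integral_mult_le_bounded: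
  fixes X Y :: "'a \<Rightarrow> real"
  assumes sub: "subalgebra M G" and Y_G: "Y \<in> borel_measurable G" and [measurable]: "X \<in> borel_measurable M"
    and X_nonneg: "\<And>\<omega>. 0 \<le> X \<omega>" and Y_bounds: "\<And>\<omega>. 0 \<le> Y \<omega>" "\<And>\<omega>. Y \<omega> \<le> c"
    and X_int: "integrable M X"
    and bounded: "AE \<omega> in M. real_cond_exp M G X \<omega> \<le> K"
  shows "integrable M (\<lambda>\<omega>. Y \<omega> * X \<omega>)" and "(\<integral>\<omega>. Y \<omega> * X \<omega> \<partial>M) \<le> K * (\<integral>\<omega>. Y \<omega> \<partial>M)"
proof -
  interpret sigma_finite_subalgebra M G
    by (rule sigma_finite_subalgebra_if_subalgebra[OF sub])
  have [measurable]: "Y \<in> borel_measurable M"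
    by (rule measurable_from_subalg[OF sub Y_G])
  have Y_norm: "norm (Y \<omega>) \<le> norm c" for \<omega>
    using Y_bounds[of \<omega>] abs_ge_self[of c] by (simp add: abs_of_nonneg)
  have Y_int: "integrable M Y"
    by (rule Bochner_Integration.integrable_bound[where f = "\<lambda>_. c", OF _ _ AE_I2[OF Y_norm]]) auto
  have YX_norm: "norm (Y \<omega> * X \<omega>) \<le> norm (c * X \<omega>)" for \<omega>
    using mult_right_mono[OF Y_bounds(2)[of \<omega>] X_nonneg[of \<omega>]] mult_right_mono[OF abs_ge_self X_nonneg, of c \<omega>]
      Y_bounds(1)[of \<omega>] X_nonneg[of \<omega>]
    by (simp add: abs_mult)
  show int: "integrable M (\<lambda>\<omega>. Y \<omega> * X \<omega>)"
    by (rule Bochner_Integration.integrable_bound[where f = "\<lambda>\<omega>. c * X \<omega>", OF _ _ AE_I2[OF YX_norm]])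
       (use X_int in auto)
  have "(\<integral>\<omega>. Y \<omega> * X \<omega> \<partial>M) = (\<integral>\<omega>. Y \<omega> * real_cond_exp M G X \<omega> \<partial>M)"
    by (rule real_cond_exp_intg(2)[OF int Y_G, symmetric]) measurable
  also have "\<dots> \<le> (\<integral>\<omega>. Y \<omega> * K \<partial>M)"
  proof (rule integral_mono_AE)
    show "integrable M (\<lambda>\<omega>. Y \<omega> * real_cond_exp M G X \<omega>)"
      by (rule real_cond_exp_intg(1)[OF int Y_G]) measurable
    show "integrable M (\<lambda>\<omega>. Y \<omega> * K)" using Y_int by simp
    show "AE \<omega> in M. Y \<omega> * real_cond_exp M G X \<omega> \<le> Y \<omega> * K"
      using bounded by eventually_elim (simp add: Y_bounds mult_left_mono)
  qed
  finally show "(\<integral>\<omega>. Y \<omega> * X \<omega> \<partial>M) \<le> K * (\<integral>\<omega>. Y \<omega> \<partial>M)"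
    by (simp add: mult.commute)
qed

lemma (in prob_space) cond_exp_bounded_imp_integral_mult_le:
  fixes X Y :: "'a \<Rightarrow> real"
  assumes sub: "subalgebra M G" and Y_G[measurable]: "Y \<in> borel_measurable G"
    and X_meas[measurable]: "X \<in> borel_measurable M"
    and X_nonneg: "\<And>\<omega>. 0 \<le> X \<omega>" and Y_nonneg: "\<And>\<omega>. 0 \<le> Y \<omega>"
    and X_int: "integrable M X" and Y_int: "integrable M Y"
    and bounded: "AE \<omega> in M. real_cond_exp M G X \<omega> \<le> K"
  shows "integrable M (\<lambda>\<omega>. X \<omega> * Y \<omega>)" and "(\<integral>\<omega>. X \<omega> * Y \<omega> \<partial>M) \<le> K * (\<integral>\<omega>. Y \<omega> \<partial>M)"
proof -
  have [measurable]: "Y \<in> borel_measurable M"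
    by (rule measurable_from_subalg[OF sub]) measurable
  have "AE \<omega> in M. 0 \<le> real_cond_exp M G X \<omega>"
    using X_nonneg sigma_finite_subalgebra.real_cond_exp_pos[OF sigma_finite_subalgebra_if_subalgebra[OF sub]]
    by auto
  with bounded have "AE \<omega> in M. 0 \<le> K" by eventually_elim simp
  then have "0 \<le> K" by simp
  \<comment> \<open>truncating Y makes the products integrable, so that Y can be pulled into the conditional expectation\<close>
  define T where "T k \<omega> = min (Y \<omega>) (real k)" for k \<omega>
  have T_G: "T k \<in> borel_measurable G" for k unfolding T_def by measurable
  have T_bounds: "0 \<le> T k \<omega>" "T k \<omega> \<le> Y \<omega>" "T k \<omega> \<le> real k" for k \<omega>
    using Y_nonneg by (auto simp: T_def)
  note truncated = cond_exp_bounded_imp_integral_mult_le_bounded[OF sub T_G X_meas X_nonneg T_bounds(1,3) X_int bounded]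
  have "(\<integral>\<^sup>+\<omega>. ennreal (X \<omega> * Y \<omega>) \<partial>M) = (\<integral>\<^sup>+\<omega>. (SUP k. ennreal (T k \<omega> * X \<omega>)) \<partial>M)"
  proof (rule nn_integral_cong)
    fix \<omega>
    obtain k :: nat where "Y \<omega> \<le> real k" using real_arch_simple by blast
    then have "T k \<omega> = Y \<omega>" by (simp add: T_def)
    then show "ennreal (X \<omega> * Y \<omega>) = (SUP k. ennreal (T k \<omega> * X \<omega>))"
      by (intro antisym SUP_upper2[of k] SUP_least ennreal_leI)
         (simp_all add: T_bounds X_nonneg mult.commute mult_left_mono)
  qed
  also have "\<dots> = (SUP k. \<integral>\<^sup>+\<omega>. ennreal (T k \<omega> * X \<omega>) \<partial>M)"
    by (rule nn_integral_monotone_convergence_SUP)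
       (auto intro!: incseq_SucI le_funI ennreal_leI mult_right_mono simp: T_def X_nonneg measurable_from_subalg[OF sub])
  also have "\<dots> \<le> ennreal (K * (\<integral>\<omega>. Y \<omega> \<partial>M))"
  proof (rule SUP_least)
    fix k
    have "integrable M (T k)"
      by (rule Bochner_Integration.integrable_bound[OF Y_int])
         (auto intro!: AE_I2 measurable_from_subalg[OF sub T_G] simp: T_bounds abs_of_nonneg Y_nonneg)
    then have "(\<integral>\<omega>. T k \<omega> \<partial>M) \<le> (\<integral>\<omega>. Y \<omega> \<partial>M)"
      using Y_int by (intro integral_mono) (auto simp: T_bounds)
    then have "(\<integral>\<omega>. T k \<omega> * X \<omega> \<partial>M) \<le> K * (\<integral>\<omega>. Y \<omega> \<partial>M)"
      using truncated(2)[of k] mult_left_mono[OF _ \<open>0 \<le> K\<close>] by (meson order_trans)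
    then show "(\<integral>\<^sup>+\<omega>. ennreal (T k \<omega> * X \<omega>) \<partial>M) \<le> ennreal (K * (\<integral>\<omega>. Y \<omega> \<partial>M))"
      using truncated(1)[of k] by (simp add: nn_integral_eq_integral T_bounds X_nonneg ennreal_leI)
  qed
  finally have bound: "(\<integral>\<^sup>+\<omega>. ennreal (X \<omega> * Y \<omega>) \<partial>M) \<le> ennreal (K * (\<integral>\<omega>. Y \<omega> \<partial>M))" .
  show int: "integrable M (\<lambda>\<omega>. X \<omega> * Y \<omega>)"
  proof (rule integrableI_bounded)
    show "(\<integral>\<^sup>+\<omega>. ennreal (norm (X \<omega> * Y \<omega>)) \<partial>M) < \<infinity>"
      using bound X_nonneg Y_nonneg by (simp add: le_less_trans)
  qed measurable
  have "ennreal (\<integral>\<omega>. X \<omega> * Y \<omega> \<partial>M) \<le> ennreal (K * (\<integral>\<omega>. Y \<omega> \<partial>M))"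
    using bound by (subst nn_integral_eq_integral[OF int, symmetric]) (simp_all add: X_nonneg Y_nonneg)
  then show "(\<integral>\<omega>. X \<omega> * Y \<omega> \<partial>M) \<le> K * (\<integral>\<omega>. Y \<omega> \<partial>M)"
    using \<open>0 \<le> K\<close> Y_nonneg by (simp add: ennreal_le_iff)
qed

section \<open>The standard Gaussian measure on real^'d\<close>

definition std_gauss :: "(real^'d) measure" where
  "std_gauss = density lborel std_gauss_density"

lemma sets_std_gauss[measurable_cong, simp]: "sets std_gauss = sets borel"
  and space_std_gauss[simp]: "space std_gauss = UNIV"
  by (simp_all add: std_gauss_def)

lemma borel_measurable_std_gauss_density[measurable]:
  "(std_gauss_density :: real^'d \<Rightarrow> ennreal) \<in> borel_measurable borel"
  unfolding std_gauss_density_def by measurable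

lemma std_gauss_density_eq_prod_Basis:
  "std_gauss_density (u :: real^'d) = (\<Prod>b\<in>Basis. ennreal (std_normal_density (u \<bullet> b)))"
proof -
  have Basis: "(Basis :: (real^'d) set) = (\<lambda>j. axis j 1) ` UNIV"
    by (auto simp: Basis_vec_def Basis_real_def)
  have "inj (\<lambda>j::'d. axis j (1::real))"
    by (rule injI) (simp add: axis_eq_axis)
  then have "(\<Prod>b\<in>Basis. ennreal (std_normal_density (u \<bullet> b))) =
      (\<Prod>j\<in>UNIV. ennreal (std_normal_density (u \<bullet> axis j 1)))"
    unfolding Basis by (simp add: prod.reindex)
  then show ?thesis
    by (simp add: std_gauss_density_def inner_axis)
qed

lemma nn_integral_std_normal_density: "(\<integral>\<^sup>+t. ennreal (std_normal_density t) \<partial>lborel) = 1"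
  by (subst nn_integral_eq_integral) auto

lemma prob_space_std_gauss: "prob_space (std_gauss :: (real^'d) measure)"
proof
  have "emeasure (std_gauss :: (real^'d) measure) UNIV = (\<integral>\<^sup>+u. std_gauss_density (u :: real^'d) \<partial>lborel)"
    unfolding std_gauss_def by (subst emeasure_density) auto
  also have "\<dots> = 1"
    unfolding std_gauss_density_eq_prod_Basis
    by (subst nn_integral_lborel_prod[where f = "\<lambda>_ t. ennreal (std_normal_density t)"])
       (simp_all add: nn_integral_std_normal_density)
  finally show "emeasure (std_gauss :: (real^'d) measure) (space std_gauss) = 1" by simp
qed

lemma nn_integral_std_gauss_component:
  fixes g :: "real \<Rightarrow> ennreal"
  assumes [measurable]: "g \<in> borel_measurable borel"
  shows "(\<integral>\<^sup>+u. g ((u :: real^'d) $ i) \<partial>std_gauss) = (\<integral>\<^sup>+t. ennreal (std_normal_density t) * g t \<partial>lborel)"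
proof -
  define e :: "real^'d" where "e = axis i 1"
  have e: "e \<in> Basis" by (simp add: e_def Basis_vec_def) blast
  define F where "F b t = ennreal (std_normal_density t) * (if b = e then g t else 1)" for b t
  have [measurable]: "F b \<in> borel_measurable borel" for b unfolding F_def by measurable
  have "std_gauss_density u * g (u $ i) = (\<Prod>b\<in>Basis. F b (u \<bullet> b))" for u :: "real^'d"
    using e unfolding std_gauss_density_eq_prod_Basis F_def
    by (simp add: prod.remove[OF finite_Basis e] prod.distrib e_def inner_axis mult.commute)
  then have "(\<integral>\<^sup>+u. g (u $ i) \<partial>std_gauss) = (\<Prod>b\<in>Basis. \<integral>\<^sup>+t. F b t \<partial>lborel)"
    by (simp add: std_gauss_def nn_integral_density nn_integral_lborel_prod)
  also have "\<dots> = (\<integral>\<^sup>+t. F e t \<partial>lborel)"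
    using e by (simp add: prod.remove[OF finite_Basis e] F_def nn_integral_std_normal_density)
  finally show ?thesis by (simp add: F_def)
qed

lemma integrable_std_gauss_component_pow4: "integrable std_gauss (\<lambda>u :: real^'d. (u $ i) ^ 4)"
proof (rule integrableI_bounded)
  have "(\<integral>\<^sup>+u. ennreal (norm ((u $ i) ^ 4)) \<partial>(std_gauss :: (real^'d) measure))
      = (\<integral>\<^sup>+t. ennreal (std_normal_density t * t ^ 4) \<partial>lborel)"
    using nn_integral_std_gauss_component[of "\<lambda>t. ennreal (t ^ 4)" i] by (simp add: ennreal_mult')
  also have "\<dots> < \<infinity>"
    using integrable_std_normal_moment[of 4] by (simp add: nn_integral_eq_integral)
  finally show "(\<integral>\<^sup>+u. ennreal (norm ((u $ i) ^ 4)) \<partial>(std_gauss :: (real^'d) measure)) < \<infinity>" .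
qed simp

lemma integrable_std_gauss_norm_pow4: "integrable std_gauss (\<lambda>u :: real^'d. (norm u) ^ 4)"
proof (rule Bochner_Integration.integrable_bound)
  show "integrable std_gauss (\<lambda>u :: real^'d. (\<Sum>i\<in>UNIV. (u $ i) ^ 4) * real CARD('d))"
    using integrable_std_gauss_component_pow4 by (intro integrable_mult_left Bochner_Integration.integrable_sum) auto
  have "(norm u) ^ 4 \<le> (\<Sum>i\<in>UNIV. (u $ i) ^ 4) * real CARD('d)" for u :: "real^'d"
  proof -
    have "(norm u)\<^sup>2 = (\<Sum>i\<in>UNIV. (u $ i)\<^sup>2)"
      unfolding norm_vec_def L2_set_def by (simp add: sum_nonneg)
    then have "(norm u) ^ 4 = (\<Sum>i\<in>UNIV. (u $ i)\<^sup>2)\<^sup>2"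
      by (simp add: power2_eq_square power4_eq_xxxx)
    also have "\<dots> \<le> (\<Sum>i\<in>UNIV. ((u $ i)\<^sup>2)\<^sup>2) * real CARD('d)"
      by (rule sum_squared_le_sum_of_squares)
    finally show ?thesis by (simp add: power2_eq_square power4_eq_xxxx mult.assoc)
  qed
  then show "AE u in (std_gauss :: (real^'d) measure). norm ((norm u) ^ 4) \<le> norm ((\<Sum>i\<in>UNIV. (u $ i) ^ 4) * real CARD('d))"
    by (intro AE_I2) (simp add: sum_nonneg)
qed simp

lemma integrable_std_gauss_norm_sq: "integrable std_gauss (\<lambda>u :: real^'d. (norm u)\<^sup>2)"
proof -
  interpret prob_space "std_gauss :: (real^'d) measure" by (rule prob_space_std_gauss)
  show ?thesis
    by (rule square_integrable_imp_integrable) (use integrable_std_gauss_norm_pow4 in \<open>simp_all flip: power_mult\<close>)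
qed

section \<open>The zeroth-order scheme\<close>

text \<open>The hypotheses of corollary2 that the argument uses, with compactness of X weakened to
  closedness.\<close>
locale zeroth_order_scheme = prob_space M
  for M :: "'a measure" +
  fixes \<mu> :: "'z measure"
    and X :: "(real^'d) set"
    and F :: "real^'d \<Rightarrow> 'z \<Rightarrow> real" and f :: "real^'d \<Rightarrow> real"
    and K L lam :: real
    and x0 y0 :: "real^'d"
    and \<alpha> \<beta> :: "nat \<Rightarrow> real"
    and U x y :: "nat \<Rightarrow> 'a \<Rightarrow> real^'d"
    and \<zeta>1 \<zeta>2 :: "nat \<Rightarrow> 'a \<Rightarrow> 'z"
    and N1 N2 :: "nat \<Rightarrow> 'a \<Rightarrow> real"
    and g Mart :: "nat \<Rightarrow> 'a \<Rightarrow> real^'d"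
    and G Fs :: "nat \<Rightarrow> 'a measure"
  assumes X: "X \<noteq> {}" "closed X" "convex X"
    and F_meas: "(\<lambda>(v, z). F v z) \<in> borel_measurable (borel \<Otimes>\<^sub>M \<mu>)"
    and f_lip: "L-lipschitz_on UNIV f"
    and lam: "lam > 0"
    and U_meas: "\<And>n. U n \<in> borel_measurable M"
    and U_gauss: "\<And>n. distributed M lborel (U n) std_gauss_density"
    and zeta_meas: "\<And>n. \<zeta>1 n \<in> measurable M \<mu>" "\<And>n. \<zeta>2 n \<in> measurable M \<mu>"
    and G_def: "\<And>n. G n = sigma (space M)
          ((\<Union>m\<in>{..n}. gen_sets M (x m) borel \<union> gen_sets M (U m) borel)
           \<union> (\<Union>m\<in>{..<n}. gen_sets M (\<zeta>1 m) \<mu> \<union> gen_sets M (\<zeta>2 m) \<mu>))"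
    and N1_def: "\<And>n \<omega>. N1 (Suc n) \<omega> =
          F (x n \<omega> + lam *\<^sub>R U n \<omega>) (\<zeta>1 n \<omega>) - f (x n \<omega> + lam *\<^sub>R U n \<omega>)"
    and N2_def: "\<And>n \<omega>. N2 (Suc n) \<omega> =
          F (x n \<omega> - lam *\<^sub>R U n \<omega>) (\<zeta>2 n \<omega>) - f (x n \<omega> - lam *\<^sub>R U n \<omega>)"
    and N1_mds: "\<And>n. integrable M (N1 (Suc n)) \<and> integrable M (\<lambda>\<omega>. (N1 (Suc n) \<omega>)\<^sup>2)
          \<and> (AE \<omega> in M. real_cond_exp M (G n) (N1 (Suc n)) \<omega> = 0)
          \<and> (AE \<omega> in M. real_cond_exp M (G n) (\<lambda>\<omega>. (N1 (Suc n) \<omega>)\<^sup>2) \<omega> \<le> K)"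
    and N2_mds: "\<And>n. integrable M (N2 (Suc n)) \<and> integrable M (\<lambda>\<omega>. (N2 (Suc n) \<omega>)\<^sup>2)
          \<and> (AE \<omega> in M. real_cond_exp M (G n) (N2 (Suc n)) \<omega> = 0)
          \<and> (AE \<omega> in M. real_cond_exp M (G n) (\<lambda>\<omega>. (N2 (Suc n) \<omega>)\<^sup>2) \<omega> \<le> K)"
    and U_indep_past: "\<And>n. prob_space.indep_set M
          (sigma_sets (space M) (gen_sets M (U n) borel))
          (sigma_sets (space M)
             ((\<Union>m\<in>{..n}. gen_sets M (x m) borel)
              \<union> (\<Union>m\<in>{..<n}. gen_sets M (U m) borel \<union> gen_sets M (\<zeta>1 m) \<mu> \<union> gen_sets M (\<zeta>2 m) \<mu>)))"
    and g_def: "\<And>n \<omega>. g n \<omega> =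
          ((F (x n \<omega> + lam *\<^sub>R U n \<omega>) (\<zeta>1 n \<omega>) - F (x n \<omega> - lam *\<^sub>R U n \<omega>) (\<zeta>2 n \<omega>)) / (2 * lam))
          *\<^sub>R U n \<omega>"
    and y_init: "\<And>\<omega>. y 0 \<omega> = y0"
    and y_rec: "\<And>n \<omega>. y (Suc n) \<omega> = y n \<omega> + \<beta> n *\<^sub>R (g n \<omega> - y n \<omega>)"
    and x_init: "\<And>\<omega>. x 0 \<omega> = x0"
    and x_rec: "\<And>n \<omega>. x (Suc n) \<omega> = closest_point X (x n \<omega> - \<alpha> n *\<^sub>R y n \<omega>)"
    and Fs_def: "\<And>n. Fs n = sigma (space M) (\<Union>k\<in>{1..n}. gen_sets M (x k) borel)"
    and Mart_def: "\<And>n \<omega>. Mart (Suc n) \<omega> =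
          g n \<omega> - (\<chi> i. real_cond_exp M (Fs n) (\<lambda>\<omega>'. g n \<omega>' $ i) \<omega>)"
begin

lemmas [measurable] = U_meas zeta_meas

lemma f_borel[measurable]: "f \<in> borel_measurable borel"
  using lipschitz_on_continuous_on[OF f_lip] by (rule borel_measurable_continuous_onI)

lemma closest_point_borel[measurable]: "closest_point X \<in> borel_measurable borel"
  using continuous_on_closest_point[OF X(3,2,1)] by (rule borel_measurable_continuous_onI)

lemma g_measurable_wrt:
  assumes [measurable]: "x n \<in> borel_measurable N" "U n \<in> borel_measurable N"
    "\<zeta>1 n \<in> measurable N \<mu>" "\<zeta>2 n \<in> measurable N \<mu>"
  shows "g n \<in> borel_measurable N"
proof -
  have [measurable]: "(\<lambda>\<omega>. F (v \<omega>) (z \<omega>)) \<in> borel_measurable N"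
    if [measurable]: "v \<in> borel_measurable N" "z \<in> measurable N \<mu>" for v z
    using measurable_compose[OF measurable_Pair[OF that] F_meas] by simp
  have "g n = (\<lambda>\<omega>. ((F (x n \<omega> + lam *\<^sub>R U n \<omega>) (\<zeta>1 n \<omega>) - F (x n \<omega> - lam *\<^sub>R U n \<omega>) (\<zeta>2 n \<omega>))
      / (2 * lam)) *\<^sub>R U n \<omega>)"
    using g_def by auto
  then show ?thesis by simp
qed

lemma x_y_measurable: "x n \<in> borel_measurable M \<and> y n \<in> borel_measurable M"
proof (induction n)
  case 0
  have "x 0 = (\<lambda>_. x0)" "y 0 = (\<lambda>_. y0)" using x_init y_init by auto
  then show ?case by simp
next
  case (Suc n)
  then have [measurable]: "x n \<in> borel_measurable M" "y n \<in> borel_measurable M" "g n \<in> borel_measurable M"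
    using g_measurable_wrt U_meas zeta_meas by auto
  have "x (Suc n) = (\<lambda>\<omega>. closest_point X (x n \<omega> - \<alpha> n *\<^sub>R y n \<omega>))"
    "y (Suc n) = (\<lambda>\<omega>. y n \<omega> + \<beta> n *\<^sub>R (g n \<omega> - y n \<omega>))"
    using x_rec y_rec by auto
  then show ?case by simp
qed

lemma x_measurable[measurable]: "x n \<in> borel_measurable M"
  and y_measurable[measurable]: "y n \<in> borel_measurable M"
  and g_measurable[measurable]: "g n \<in> borel_measurable M"
  using x_y_measurable g_measurable_wrt U_meas zeta_meas by auto

definition hist_gen :: "nat \<Rightarrow> 'a set set" where
  "hist_gen j = (\<Union>m\<in>{..j}. gen_sets M (x m) borel)
     \<union> (\<Union>m\<in>{..<j}. gen_sets M (U m) borel \<union> gen_sets M (\<zeta>1 m) \<mu> \<union> gen_sets M (\<zeta>2 m) \<mu>)"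

text \<open>The information available just before U j is drawn; by U_indep_past, U j is independent of it.\<close>
definition hist :: "nat \<Rightarrow> 'a measure" where
  "hist j = sigma (space M) (hist_gen j)"

lemma hist_gen_sets: "hist_gen j \<subseteq> sets M"
  unfolding hist_gen_def
  using gen_sets_subset_sets[OF x_measurable] gen_sets_subset_sets[OF U_meas]
    gen_sets_subset_sets[OF zeta_meas(1)] gen_sets_subset_sets[OF zeta_meas(2)]
  by blast

lemma sets_hist: "sets (hist j) = sigma_sets (space M) (hist_gen j)"
  and space_hist: "space (hist j) = space M"
proof -
  have "hist_gen j \<subseteq> Pow (space M)" using hist_gen_sets sets.sets_into_space by blast
  then show "sets (hist j) = sigma_sets (space M) (hist_gen j)" "space (hist j) = space M"
    by (simp_all add: hist_def sets_measure_of space_measure_of)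
qed

lemma subalgebra_hist: "subalgebra M (hist j)"
  unfolding hist_def by (rule subalgebra_sigma[OF hist_gen_sets])

lemma G_generators_sets:
  "(\<Union>m\<in>{..j}. gen_sets M (x m) borel \<union> gen_sets M (U m) borel)
     \<union> (\<Union>m\<in>{..<j}. gen_sets M (\<zeta>1 m) \<mu> \<union> gen_sets M (\<zeta>2 m) \<mu>) \<subseteq> sets M"
  using gen_sets_subset_sets[OF x_measurable] gen_sets_subset_sets[OF U_meas]
    gen_sets_subset_sets[OF zeta_meas(1)] gen_sets_subset_sets[OF zeta_meas(2)]
  by blast

lemma subalgebra_G: "subalgebra M (G j)"
  unfolding G_def by (rule subalgebra_sigma[OF G_generators_sets])

lemma subalgebra_G_hist: "subalgebra (G j) (hist j)"
  unfolding G_def hist_def by (rule subalgebra_sigma_mono[OF _ G_generators_sets]) (auto simp: hist_gen_def)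

lemma subalgebra_Fs: "subalgebra M (Fs j)"
  unfolding Fs_def using gen_sets_subset_sets[OF x_measurable]
  by (intro subalgebra_sigma) blast

lemma subalgebra_hist_Fs: "m \<le> j \<Longrightarrow> subalgebra (hist j) (Fs m)"
  unfolding hist_def Fs_def by (rule subalgebra_sigma_mono[OF _ hist_gen_sets]) (auto simp: hist_gen_def)

lemma x_hist: "m \<le> j \<Longrightarrow> x m \<in> borel_measurable (hist j)"
  unfolding hist_def by (rule measurable_sigma_gen_sets[OF x_measurable _ hist_gen_sets]) (auto simp: hist_gen_def)

lemma g_hist: "m < j \<Longrightarrow> g m \<in> borel_measurable (hist j)"
  unfolding hist_def
  by (intro g_measurable_wrt measurable_sigma_gen_sets[OF _ _ hist_gen_sets] x_measurable U_meas zeta_meas)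
     (auto simp: hist_gen_def)

lemma U_G: "U j \<in> borel_measurable (G j)"
  unfolding G_def by (rule measurable_sigma_gen_sets[OF U_meas _ G_generators_sets]) auto

lemma x_Fs: "1 \<le> j \<Longrightarrow> x j \<in> borel_measurable (Fs j)"
  unfolding Fs_def using gen_sets_subset_sets[OF x_measurable]
  by (intro measurable_sigma_gen_sets[OF x_measurable]) auto

lemma U_lborel[measurable]: "U n \<in> measurable M lborel"
  using U_meas by simp

lemma distr_U: "distr M lborel (U n) = std_gauss"
  using distributed_distr_eq_density[OF U_gauss[of n]] by (simp add: std_gauss_def)

lemma integrable_U_iff:
  fixes h :: "real^'d \<Rightarrow> real"
  assumes [measurable]: "h \<in> borel_measurable borel"
  shows "integrable M (\<lambda>\<omega>. h (U n \<omega>)) \<longleftrightarrow> integrable std_gauss h"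
  using integrable_distr_eq[of "U n" M lborel h] by (simp add: distr_U)

lemma integral_U:
  fixes h :: "real^'d \<Rightarrow> real"
  assumes [measurable]: "h \<in> borel_measurable borel"
  shows "(\<integral>\<omega>. h (U n \<omega>) \<partial>M) = (\<integral>u. h u \<partial>std_gauss)"
  using integral_distr[of "U n" M lborel h] by (simp add: distr_U)

lemma integrable_norm_sq_U: "integrable M (\<lambda>\<omega>. (norm (U n \<omega>))\<^sup>2)"
  and integrable_norm_pow4_U: "integrable M (\<lambda>\<omega>. (norm (U n \<omega>)) ^ 4)"
  using integrable_std_gauss_norm_sq integrable_std_gauss_norm_pow4
    integrable_U_iff[of "\<lambda>u. (norm u)\<^sup>2"] integrable_U_iff[of "\<lambda>u. (norm u) ^ 4"]
  by simp_all

lemma indep_U_hist: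
  assumes "W \<in> measurable (hist j) S"
  shows "indep_set (gen_sets M (U j) lborel) (gen_sets M W S)"
proof (rule indep_set_mono[OF U_indep_past[of j, folded hist_gen_def]])
  show "gen_sets M (U j) lborel \<subseteq> sigma_sets (space M) (gen_sets M (U j) borel)"
    by (auto simp: gen_sets_def)
  show "gen_sets M W S \<subseteq> sigma_sets (space M) (hist_gen j)"
    using measurable_sets[OF assms] by (auto simp: gen_sets_def sets_hist space_hist)
qed

lemma indep_var_U_hist:
  fixes Z :: "'a \<Rightarrow> real" and h :: "real^'d \<Rightarrow> real"
  assumes Z: "Z \<in> borel_measurable (hist j)" and h[measurable]: "h \<in> borel_measurable borel"
  shows "indep_var borel (\<lambda>\<omega>. h (U j \<omega>)) borel Z"
  unfolding indep_var_eq
proof (intro conjI)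
  show "random_variable borel (\<lambda>\<omega>. h (U j \<omega>))" by measurable
  show "random_variable borel Z" by (rule measurable_from_subalg[OF subalgebra_hist Z])
  have "{(\<lambda>\<omega>. h (U j \<omega>)) -` A \<inter> space M |A. A \<in> sets borel} \<subseteq> gen_sets M (U j) borel"
  proof safe
    fix A :: "real set" assume "A \<in> sets borel"
    then have "h -` A \<in> sets borel" using measurable_sets[OF h] by simp
    then show "(\<lambda>\<omega>. h (U j \<omega>)) -` A \<inter> space M \<in> gen_sets M (U j) borel"
      unfolding gen_sets_def by blast
  qed
  then have "sigma_sets (space M) {(\<lambda>\<omega>. h (U j \<omega>)) -` A \<inter> space M |A. A \<in> sets borel}
      \<subseteq> sigma_sets (space M) (gen_sets M (U j) borel)"
    by (rule sigma_sets_mono')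
  moreover have "sigma_sets (space M) {Z -` A \<inter> space M |A. A \<in> sets borel} \<subseteq> sigma_sets (space M) (hist_gen j)"
    unfolding sets_hist[symmetric]
    using measurable_sets[OF Z] sets.top[of "hist j"]
    by (intro sets.sigma_sets_subset') (auto simp: space_hist)
  ultimately show "indep_set (sigma_sets (space M) {(\<lambda>\<omega>. h (U j \<omega>)) -` A \<inter> space M |A. A \<in> sets borel})
      (sigma_sets (space M) {Z -` A \<inter> space M |A. A \<in> sets borel})"
    by (rule indep_set_mono[OF U_indep_past[of j, folded hist_gen_def]])
qed

lemma integrable_hist_mult_norm_sq_U:
  fixes Z :: "'a \<Rightarrow> real"
  assumes "Z \<in> borel_measurable (hist j)" "integrable M Z"
  shows "integrable M (\<lambda>\<omega>. (norm (U j \<omega>))\<^sup>2 * Z \<omega>)"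
  using indep_var_integrable[OF indep_var_U_hist[OF assms(1)] integrable_norm_sq_U assms(2)] by simp

lemma noise_orthogonal_hist:
  fixes Z N :: "'a \<Rightarrow> real"
  assumes Z_hist: "Z \<in> borel_measurable (hist j)" and Z: "integrable M (\<lambda>\<omega>. (Z \<omega>)\<^sup>2)"
    and N_meas: "N \<in> borel_measurable M" and N: "integrable M (\<lambda>\<omega>. (N \<omega>)\<^sup>2)"
    and centered: "AE \<omega> in M. real_cond_exp M (G j) N \<omega> = 0"
  shows "integrable M (\<lambda>\<omega>. Z \<omega> * U j \<omega> $ i * N \<omega>)" and "(\<integral>\<omega>. Z \<omega> * U j \<omega> $ i * N \<omega> \<partial>M) = 0"
proof -
  interpret sigma_finite_subalgebra M "G j"
    by (rule sigma_finite_subalgebra_if_subalgebra[OF subalgebra_G])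
  have ZU_G: "(\<lambda>\<omega>. Z \<omega> * U j \<omega> $ i) \<in> borel_measurable (G j)"
    using measurable_from_subalg[OF subalgebra_G_hist Z_hist] measurable_compose[OF U_G borel_measurable_nth]
    by (rule borel_measurable_times)
  have "(\<lambda>\<omega>. (Z \<omega>)\<^sup>2) \<in> borel_measurable (hist j)"
    using Z_hist by simp
  then have "integrable M (\<lambda>\<omega>. (norm (U j \<omega>))\<^sup>2 * (Z \<omega>)\<^sup>2)"
    using Z by (rule integrable_hist_mult_norm_sq_U)
  then have "integrable M (\<lambda>\<omega>. (Z \<omega> * U j \<omega> $ i)\<^sup>2)"
  proof (rule Bochner_Integration.integrable_bound)
    show "AE \<omega> in M. norm ((Z \<omega> * U j \<omega> $ i)\<^sup>2) \<le> norm ((norm (U j \<omega>))\<^sup>2 * (Z \<omega>)\<^sup>2)"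
      using component_sq_le_norm_sq[of "U j _" i]
      by (intro AE_I2) (simp add: power_mult_distrib mult_left_mono mult.commute)
  qed (rule measurable_from_subalg[OF subalg], use ZU_G in simp)
  then show int: "integrable M (\<lambda>\<omega>. Z \<omega> * U j \<omega> $ i * N \<omega>)"
    using N measurable_from_subalg[OF subalg ZU_G] N_meas by (intro integrable_mult_of_sq)
  have "(\<integral>\<omega>. Z \<omega> * U j \<omega> $ i * N \<omega> \<partial>M) = (\<integral>\<omega>. Z \<omega> * U j \<omega> $ i * real_cond_exp M (G j) N \<omega> \<partial>M)"
    by (rule real_cond_exp_intg(2)[OF int ZU_G N_meas, symmetric])
  also have "\<dots> = 0"
    using centered by (subst integral_eq_zero_AE) auto
  finally show "(\<integral>\<omega>. Z \<omega> * U j \<omega> $ i * N \<omega> \<partial>M) = 0" .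
qed

definition two_point_est :: "real^'d \<Rightarrow> real^'d \<Rightarrow> real^'d" where
  "two_point_est v u = ((f (v + lam *\<^sub>R u) - f (v - lam *\<^sub>R u)) / (2 * lam)) *\<^sub>R u"

definition smoothed_grad :: "real^'d \<Rightarrow> real^'d" where
  "smoothed_grad v = (\<chi> i. \<integral>u. two_point_est v u $ i \<partial>std_gauss)"

lemma L_nonneg: "0 \<le> L"
  using f_lip by (rule lipschitz_on_nonneg)

lemma two_point_est_measurable[measurable (raw)]:
  assumes [measurable]: "a \<in> borel_measurable N" "b \<in> borel_measurable N"
  shows "(\<lambda>\<omega>. two_point_est (a \<omega>) (b \<omega>)) \<in> borel_measurable N"
  unfolding two_point_est_def by measurable

lemma norm_two_point_est_le: "norm (two_point_est v u) \<le> L * (norm u)\<^sup>2"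
proof -
  have "dist (v + lam *\<^sub>R u) (v - lam *\<^sub>R u) = 2 * lam * norm u"
    using lam by (simp add: dist_norm flip: scaleR_2)
  moreover have "dist (f (v + lam *\<^sub>R u)) (f (v - lam *\<^sub>R u)) \<le> L * dist (v + lam *\<^sub>R u) (v - lam *\<^sub>R u)"
    using f_lip by (rule lipschitz_onD) auto
  ultimately have "\<bar>f (v + lam *\<^sub>R u) - f (v - lam *\<^sub>R u)\<bar> / (2 * lam) \<le> L * norm u"
    using lam by (simp add: dist_real_def divide_le_eq mult_ac)
  then have "\<bar>f (v + lam *\<^sub>R u) - f (v - lam *\<^sub>R u)\<bar> / (2 * lam) * norm u \<le> L * norm u * norm u"
    by (rule mult_right_mono) simp
  then show ?thesis
    unfolding two_point_est_def using lam by (simp add: power2_eq_square mult.assoc)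
qed

lemma abs_two_point_est_component_le: "\<bar>two_point_est v u $ i\<bar> \<le> L * (norm u)\<^sup>2"
  using component_le_norm_cart norm_two_point_est_le order_trans by blast

lemma integrable_two_point_est_component: "integrable std_gauss (\<lambda>u. two_point_est v u $ i)"
proof (rule Bochner_Integration.integrable_bound)
  show "integrable std_gauss (\<lambda>u :: real^'d. L * (norm u)\<^sup>2)"
    by (simp add: integrable_std_gauss_norm_sq)
  show "AE u in std_gauss. norm (two_point_est v u $ i) \<le> norm (L * (norm u)\<^sup>2)"
    by (intro AE_I2) (simp add: abs_two_point_est_component_le L_nonneg)
qed (simp add: two_point_est_def)

lemma smoothed_grad_measurable[measurable]: "smoothed_grad \<in> borel_measurable borel"
proof -
  interpret std_gauss: prob_space "std_gauss :: (real^'d) measure" by (rule prob_space_std_gauss)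
  have "sets (borel \<Otimes>\<^sub>M (std_gauss :: (real^'d) measure)) = sets (borel \<Otimes>\<^sub>M borel)"
    by (rule sets_pair_measure_cong) simp_all
  then have "(\<lambda>(v, u). two_point_est v u $ i) \<in> borel_measurable (borel \<Otimes>\<^sub>M (std_gauss :: (real^'d) measure))" for i
    unfolding measurable_split_conv by (subst measurable_cong_sets[OF _ refl]) measurable
  then show ?thesis
    unfolding smoothed_grad_def by (simp add: std_gauss.borel_measurable_lebesgue_integral)
qed

lemma smoothed_grad_bounded:
  obtains B where "\<And>v. norm (smoothed_grad v) \<le> B"
proof
  define m2 where "m2 = (\<integral>u. (norm u)\<^sup>2 \<partial>(std_gauss :: (real^'d) measure))"
  have component: "\<bar>smoothed_grad v $ i\<bar> \<le> L * m2" for v i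
  proof -
    have "\<bar>smoothed_grad v $ i\<bar> \<le> (\<integral>u. \<bar>two_point_est v u $ i\<bar> \<partial>std_gauss)"
      unfolding smoothed_grad_def by (simp add: integral_abs_bound)
    also have "\<dots> \<le> (\<integral>u. L * (norm u)\<^sup>2 \<partial>(std_gauss :: (real^'d) measure))"
      by (intro integral_mono)
         (simp_all add: integrable_two_point_est_component integrable_std_gauss_norm_sq abs_two_point_est_component_le)
    finally show ?thesis by (simp add: m2_def)
  qed
  show "norm (smoothed_grad v) \<le> real CARD('d) * (L * m2)" for v
    using norm_le_l1_cart[of "smoothed_grad v"] sum_bounded_above[of UNIV "\<lambda>i. \<bar>smoothed_grad v $ i\<bar>" "L * m2"]
      component by (simp add: order_trans)
qed

lemma g_eq_noise_plus_two_point_est: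
  "g j \<omega> = ((N1 (Suc j) \<omega> - N2 (Suc j) \<omega>) / (2 * lam)) *\<^sub>R U j \<omega> + two_point_est (x j \<omega>) (U j \<omega>)"
  unfolding g_def N1_def N2_def two_point_est_def
  by (simp add: diff_divide_distrib scaleR_diff_left[symmetric] scaleR_add_left[symmetric])

lemma integral_hist_mult_two_point_est:
  fixes Z :: "'a \<Rightarrow> real"
  assumes Z_hist: "Z \<in> borel_measurable (hist j)" and Z: "integrable M (\<lambda>\<omega>. (Z \<omega>)\<^sup>2)"
  shows "integrable M (\<lambda>\<omega>. Z \<omega> * two_point_est (x j \<omega>) (U j \<omega>) $ i)"
    and "(\<integral>\<omega>. Z \<omega> * two_point_est (x j \<omega>) (U j \<omega>) $ i \<partial>M) = (\<integral>\<omega>. Z \<omega> * smoothed_grad (x j \<omega>) $ i \<partial>M)"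
proof -
  have Z_meas[measurable]: "Z \<in> borel_measurable M"
    using measurable_from_subalg[OF subalgebra_hist Z_hist] .
  have "integrable M (\<lambda>\<omega>. \<bar>Z \<omega>\<bar>)"
    using square_integrable_imp_integrable[OF Z_meas Z] by simp
  moreover have "(\<lambda>\<omega>. \<bar>Z \<omega>\<bar>) \<in> borel_measurable (hist j)"
    using Z_hist by simp
  ultimately have "integrable M (\<lambda>\<omega>. (norm (U j \<omega>))\<^sup>2 * \<bar>Z \<omega>\<bar>)"
    by (intro integrable_hist_mult_norm_sq_U)
  then have majorant: "integrable M (\<lambda>\<omega>. L * ((norm (U j \<omega>))\<^sup>2 * \<bar>Z \<omega>\<bar>))"
    by simp
  have bound: "\<bar>Z \<omega> * two_point_est (x j \<omega>) (U j \<omega>) $ i\<bar> \<le> L * ((norm (U j \<omega>))\<^sup>2 * \<bar>Z \<omega>\<bar>)" for \<omega>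
  proof -
    have "\<bar>Z \<omega>\<bar> * \<bar>two_point_est (x j \<omega>) (U j \<omega>) $ i\<bar> \<le> \<bar>Z \<omega>\<bar> * (L * (norm (U j \<omega>))\<^sup>2)"
      by (rule mult_left_mono[OF abs_two_point_est_component_le]) simp
    then show ?thesis by (simp add: abs_mult mult_ac)
  qed
  show int: "integrable M (\<lambda>\<omega>. Z \<omega> * two_point_est (x j \<omega>) (U j \<omega>) $ i)"
  proof (rule Bochner_Integration.integrable_bound[OF majorant])
    show "AE \<omega> in M. norm (Z \<omega> * two_point_est (x j \<omega>) (U j \<omega>) $ i) \<le> norm (L * ((norm (U j \<omega>))\<^sup>2 * \<bar>Z \<omega>\<bar>))"
      using bound by (intro AE_I2) (simp add: L_nonneg)
    show "(\<lambda>\<omega>. Z \<omega> * two_point_est (x j \<omega>) (U j \<omega>) $ i) \<in> borel_measurable M"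
      by measurable
  qed
  have W_hist: "(\<lambda>\<omega>. (Z \<omega>, x j \<omega>)) \<in> measurable (hist j) (borel \<Otimes>\<^sub>M borel)"
    using Z_hist x_hist[OF order_refl] by (rule measurable_Pair)
  have "(\<integral>\<omega>. Z \<omega> * two_point_est (x j \<omega>) (U j \<omega>) $ i \<partial>M) =
      (\<integral>\<omega>. (\<integral>u. Z \<omega> * two_point_est (x j \<omega>) u $ i \<partial>distr M lborel (U j)) \<partial>M)"
    using integral_indep[OF U_lborel _ indep_U_hist[OF W_hist], of "\<lambda>u w. fst w * two_point_est (snd w) u $ i"] int
    by (simp add: measurable_from_subalg[OF subalgebra_hist W_hist])
  also have "\<dots> = (\<integral>\<omega>. Z \<omega> * smoothed_grad (x j \<omega>) $ i \<partial>M)"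
    by (simp add: distr_U smoothed_grad_def)
  finally show "(\<integral>\<omega>. Z \<omega> * two_point_est (x j \<omega>) (U j \<omega>) $ i \<partial>M) = (\<integral>\<omega>. Z \<omega> * smoothed_grad (x j \<omega>) $ i \<partial>M)" .
qed

lemma integral_hist_mult_g:
  fixes Z :: "'a \<Rightarrow> real"
  assumes Z_hist: "Z \<in> borel_measurable (hist j)" and Z: "integrable M (\<lambda>\<omega>. (Z \<omega>)\<^sup>2)"
  shows "integrable M (\<lambda>\<omega>. Z \<omega> * g j \<omega> $ i)"
    and "(\<integral>\<omega>. Z \<omega> * g j \<omega> $ i \<partial>M) = (\<integral>\<omega>. Z \<omega> * smoothed_grad (x j \<omega>) $ i \<partial>M)"
proof -
  have noise: "integrable M (\<lambda>\<omega>. Z \<omega> * U j \<omega> $ i * N \<omega>)" "(\<integral>\<omega>. Z \<omega> * U j \<omega> $ i * N \<omega> \<partial>M) = 0"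
    if "N \<in> {N1 (Suc j), N2 (Suc j)}" for N
    using that noise_orthogonal_hist[OF Z_hist Z _ _ _, of N] N1_mds[of j] N2_mds[of j] by auto
  note est = integral_hist_mult_two_point_est[OF Z_hist Z, of i]
  have split: "Z \<omega> * g j \<omega> $ i = (Z \<omega> * U j \<omega> $ i * N1 (Suc j) \<omega> - Z \<omega> * U j \<omega> $ i * N2 (Suc j) \<omega>) / (2 * lam)
      + Z \<omega> * two_point_est (x j \<omega>) (U j \<omega>) $ i" for \<omega>
    by (simp add: g_eq_noise_plus_two_point_est[of j \<omega>] field_simps)
  show "integrable M (\<lambda>\<omega>. Z \<omega> * g j \<omega> $ i)"
    unfolding split using noise est by simp
  show "(\<integral>\<omega>. Z \<omega> * g j \<omega> $ i \<partial>M) = (\<integral>\<omega>. Z \<omega> * smoothed_grad (x j \<omega>) $ i \<partial>M)"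
    unfolding split using noise est by simp
qed

lemma real_cond_exp_g:
  "AE \<omega> in M. real_cond_exp M (Fs j) (\<lambda>\<omega>. g j \<omega> $ i) \<omega> = smoothed_grad (x j \<omega>) $ i"
proof -
  interpret sigma_finite_subalgebra M "Fs j"
    by (rule sigma_finite_subalgebra_if_subalgebra[OF subalgebra_Fs])
  obtain B where B: "\<And>v. norm (smoothed_grad v) \<le> B" using smoothed_grad_bounded by blast
  show ?thesis
  proof (rule real_cond_exp_charact)
    fix A assume "A \<in> sets (Fs j)"
    then have "indicator A \<in> borel_measurable (hist j)"
      by (intro measurable_from_subalg[OF subalgebra_hist_Fs[OF order_refl]]) simp
    moreover have "integrable M (\<lambda>\<omega>. (indicator A \<omega> :: real)\<^sup>2)"
    proof -
      have "A \<in> sets M" using \<open>A \<in> sets (Fs j)\<close> subalg by (auto simp: subalgebra_def)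
      moreover have "(\<lambda>\<omega>. (indicator A \<omega> :: real)\<^sup>2) = indicator A"
        by (auto simp: indicator_def)
      ultimately show ?thesis by (simp add: emeasure_eq_measure)
    qed
    ultimately show "(\<integral>\<omega>\<in>A. g j \<omega> $ i \<partial>M) = (\<integral>\<omega>\<in>A. smoothed_grad (x j \<omega>) $ i \<partial>M)"
      using integral_hist_mult_g(2)[of "indicator A" j i] by (simp add: set_lebesgue_integral_def)
  next
    show "integrable M (\<lambda>\<omega>. g j \<omega> $ i)"
      using integral_hist_mult_g(1)[of "\<lambda>_. 1" j i] by simp
    have bound: "norm (smoothed_grad v $ i) \<le> norm B" for v
      using component_le_norm_cart[of "smoothed_grad v" i] B[of v] by simp
    show "integrable M (\<lambda>\<omega>. smoothed_grad (x j \<omega>) $ i)"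
    proof (rule Bochner_Integration.integrable_bound[where f = "\<lambda>_. B"])
      show "AE \<omega> in M. norm (smoothed_grad (x j \<omega>) $ i) \<le> norm B"
        by (rule AE_I2, rule bound)
    qed (simp, measurable)
    show "(\<lambda>\<omega>. smoothed_grad (x j \<omega>) $ i) \<in> borel_measurable (Fs j)"
    proof (cases "j = 0")
      case True
      then show ?thesis using x_init by simp
    next
      case False
      then have [measurable]: "x j \<in> borel_measurable (Fs j)" by (intro x_Fs) simp
      show ?thesis by measurable
    qed
  qed
qed

lemma Mart_AE_eq: "AE \<omega> in M. Mart (Suc j) \<omega> = g j \<omega> - smoothed_grad (x j \<omega>)"
proof -
  have "AE \<omega> in M. \<forall>i\<in>UNIV. real_cond_exp M (Fs j) (\<lambda>\<omega>. g j \<omega> $ i) \<omega> = smoothed_grad (x j \<omega>) $ i"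
    by (subst AE_ball_countable) (auto intro: real_cond_exp_g)
  then show ?thesis
    by eventually_elim (simp add: Mart_def vec_eq_iff)
qed

lemma Mart_hist: "m < j \<Longrightarrow> Mart (Suc m) \<in> borel_measurable (hist j)"
proof -
  assume "m < j"
  have [measurable]: "g m \<in> borel_measurable (hist j)" using g_hist[OF \<open>m < j\<close>] .
  have [measurable]: "real_cond_exp M (Fs m) h \<in> borel_measurable (hist j)" for h
    using subalgebra_hist_Fs[of m j] \<open>m < j\<close> by (intro measurable_from_subalg[of "hist j" "Fs m"]) auto
  have "Mart (Suc m) = (\<lambda>\<omega>. g m \<omega> - (\<chi> i. real_cond_exp M (Fs m) (\<lambda>\<omega>'. g m \<omega>' $ i) \<omega>))"
    using Mart_def by auto
  then show ?thesis by simp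
qed

lemma Mart_measurable[measurable]: "Mart (Suc m) \<in> borel_measurable M"
  using measurable_from_subalg[OF subalgebra_hist Mart_hist[OF lessI]] .

lemma Mart_orthogonal_hist:
  assumes Z_hist: "Z \<in> borel_measurable (hist j)" and Z: "integrable M (\<lambda>\<omega>. (norm (Z \<omega>))\<^sup>2)"
  shows "(\<integral>\<omega>. inner (Z \<omega>) (Mart (Suc j) \<omega>) \<partial>M) = 0"
proof -
  have [measurable]: "Z \<in> borel_measurable M"
    using measurable_from_subalg[OF subalgebra_hist Z_hist] .
  have Zi_hist: "(\<lambda>\<omega>. Z \<omega> $ i) \<in> borel_measurable (hist j)" for i
    using Z_hist by measurable
  have Zi: "integrable M (\<lambda>\<omega>. (Z \<omega> $ i)\<^sup>2)" for i
    by (rule Bochner_Integration.integrable_bound[OF Z]) (auto intro!: AE_I2 simp: component_sq_le_norm_sq)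
  obtain B where B: "\<And>v. norm (smoothed_grad v) \<le> B" using smoothed_grad_bounded by blast
  have "integrable M (\<lambda>\<omega>. Z \<omega> $ i * smoothed_grad (x j \<omega>) $ i)" for i
  proof (rule integrable_mult_of_sq[OF _ _ Zi])
    show "integrable M (\<lambda>\<omega>. (smoothed_grad (x j \<omega>) $ i)\<^sup>2)"
    proof (rule Bochner_Integration.integrable_bound[where f = "\<lambda>_. B\<^sup>2", OF _ _ AE_I2])
      fix \<omega>
      have "(smoothed_grad (x j \<omega>) $ i)\<^sup>2 \<le> B\<^sup>2"
        using component_sq_le_norm_sq[of "smoothed_grad (x j \<omega>)" i] power_mono[OF B[of "x j \<omega>"] norm_ge_zero, of 2]
        by linarith
      then show "norm ((smoothed_grad (x j \<omega>) $ i)\<^sup>2) \<le> norm (B\<^sup>2)" by simp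
    qed auto
  qed measurable
  then have "(\<integral>\<omega>. inner (Z \<omega>) (g j \<omega> - smoothed_grad (x j \<omega>)) \<partial>M) =
      (\<Sum>i\<in>UNIV. (\<integral>\<omega>. Z \<omega> $ i * g j \<omega> $ i \<partial>M) - (\<integral>\<omega>. Z \<omega> $ i * smoothed_grad (x j \<omega>) $ i \<partial>M))"
    using integral_hist_mult_g(1)[OF Zi_hist Zi]
    by (simp add: inner_vec_def right_diff_distrib Bochner_Integration.integral_sum)
  also have "\<dots> = 0"
    using integral_hist_mult_g(2)[OF Zi_hist Zi] by simp
  finally show ?thesis
    using Mart_AE_eq[of j] by (subst integral_cong_AE[where g = "\<lambda>\<omega>. inner (Z \<omega>) (g j \<omega> - smoothed_grad (x j \<omega>))"]) auto
qed

lemma noise_U_second_moment: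
  assumes "N \<in> {N1 (Suc j), N2 (Suc j)}"
  shows "integrable M (\<lambda>\<omega>. (N \<omega>)\<^sup>2 * (norm (U j \<omega>))\<^sup>2)"
    and "(\<integral>\<omega>. (N \<omega>)\<^sup>2 * (norm (U j \<omega>))\<^sup>2 \<partial>M) \<le> K * (\<integral>u. (norm u)\<^sup>2 \<partial>(std_gauss :: (real^'d) measure))"
proof -
  have [measurable]: "N \<in> borel_measurable M"
    and "integrable M (\<lambda>\<omega>. (N \<omega>)\<^sup>2)" "AE \<omega> in M. real_cond_exp M (G j) (\<lambda>\<omega>. (N \<omega>)\<^sup>2) \<omega> \<le> K"
    using assms N1_mds[of j] N2_mds[of j] by auto
  moreover have "(\<lambda>\<omega>. (norm (U j \<omega>))\<^sup>2) \<in> borel_measurable (G j)"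
    using U_G by measurable
  ultimately show "integrable M (\<lambda>\<omega>. (N \<omega>)\<^sup>2 * (norm (U j \<omega>))\<^sup>2)"
    and "(\<integral>\<omega>. (N \<omega>)\<^sup>2 * (norm (U j \<omega>))\<^sup>2 \<partial>M) \<le> K * (\<integral>u. (norm u)\<^sup>2 \<partial>(std_gauss :: (real^'d) measure))"
    using cond_exp_bounded_imp_integral_mult_le[OF subalgebra_G,
        where Y = "\<lambda>\<omega>. (norm (U j \<omega>))\<^sup>2" and X = "\<lambda>\<omega>. (N \<omega>)\<^sup>2" and K = K]
      integrable_norm_sq_U[of j] integral_U[of "\<lambda>u. (norm u)\<^sup>2" j]
    by auto
qed

definition Mart_sq_majorant :: "real \<Rightarrow> nat \<Rightarrow> 'a \<Rightarrow> real" where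
  "Mart_sq_majorant B j \<omega> = 4 * ((N1 (Suc j) \<omega>)\<^sup>2 * (norm (U j \<omega>))\<^sup>2 / (2 * lam)\<^sup>2
     + (N2 (Suc j) \<omega>)\<^sup>2 * (norm (U j \<omega>))\<^sup>2 / (2 * lam)\<^sup>2 + L\<^sup>2 * (norm (U j \<omega>)) ^ 4 + B\<^sup>2)"

lemma norm_g_minus_smoothed_grad_sq_le:
  assumes B: "\<And>v. norm (smoothed_grad v) \<le> B"
  shows "(norm (g j \<omega> - smoothed_grad (x j \<omega>)))\<^sup>2 \<le> Mart_sq_majorant B j \<omega>"
proof -
  define u where "u = norm (U j \<omega>)"
  have "norm (((N1 (Suc j) \<omega> - N2 (Suc j) \<omega>) / (2 * lam)) *\<^sub>R U j \<omega>) \<le>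
      \<bar>N1 (Suc j) \<omega>\<bar> * u / (2 * lam) + \<bar>N2 (Suc j) \<omega>\<bar> * u / (2 * lam)"
    using lam abs_triangle_ineq4[of "N1 (Suc j) \<omega>" "N2 (Suc j) \<omega>"]
    by (simp add: u_def add_divide_distrib[symmetric] divide_right_mono mult_right_mono flip: distrib_right)
  then have "norm (g j \<omega> - smoothed_grad (x j \<omega>)) \<le>
      \<bar>N1 (Suc j) \<omega>\<bar> * u / (2 * lam) + \<bar>N2 (Suc j) \<omega>\<bar> * u / (2 * lam) + L * u\<^sup>2 + B"
    unfolding g_eq_noise_plus_two_point_est
    using norm_triangle_ineq4[of _ "smoothed_grad (x j \<omega>)"] norm_triangle_ineq[of _ "two_point_est (x j \<omega>) (U j \<omega>)"]
      norm_two_point_est_le[of "x j \<omega>" "U j \<omega>"] B[of "x j \<omega>"]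
    unfolding u_def by (smt (verit))
  then have "(norm (g j \<omega> - smoothed_grad (x j \<omega>)))\<^sup>2 \<le>
      (\<bar>N1 (Suc j) \<omega>\<bar> * u / (2 * lam) + \<bar>N2 (Suc j) \<omega>\<bar> * u / (2 * lam) + L * u\<^sup>2 + B)\<^sup>2"
    by (rule power_mono) simp
  also have "\<dots> \<le> 4 * ((\<bar>N1 (Suc j) \<omega>\<bar> * u / (2 * lam))\<^sup>2 + (\<bar>N2 (Suc j) \<omega>\<bar> * u / (2 * lam))\<^sup>2
      + (L * u\<^sup>2)\<^sup>2 + B\<^sup>2)"
    by (rule sq_sum4_le)
  finally show ?thesis
    by (simp add: Mart_sq_majorant_def u_def power_mult_distrib power_divide flip: power_mult)
qed

lemma integrable_Mart_sq_majorant: "integrable M (Mart_sq_majorant B j)"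
  and integral_Mart_sq_majorant_le: "(\<integral>\<omega>. Mart_sq_majorant B j \<omega> \<partial>M) \<le>
    4 * (2 * (K * (\<integral>u. (norm u)\<^sup>2 \<partial>(std_gauss :: (real^'d) measure))) / (2 * lam)\<^sup>2
      + L\<^sup>2 * (\<integral>u. (norm u) ^ 4 \<partial>(std_gauss :: (real^'d) measure)) + B\<^sup>2)"
proof -
  note N1 = noise_U_second_moment[of "N1 (Suc j)" j, simplified]
    and N2 = noise_U_second_moment[of "N2 (Suc j)" j, simplified]
  show "integrable M (Mart_sq_majorant B j)"
    unfolding Mart_sq_majorant_def using N1 N2 integrable_norm_pow4_U[of j] by simp
  have "(\<integral>\<omega>. Mart_sq_majorant B j \<omega> \<partial>M) = 4 * (((\<integral>\<omega>. (N1 (Suc j) \<omega>)\<^sup>2 * (norm (U j \<omega>))\<^sup>2 \<partial>M)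
      + (\<integral>\<omega>. (N2 (Suc j) \<omega>)\<^sup>2 * (norm (U j \<omega>))\<^sup>2 \<partial>M)) / (2 * lam)\<^sup>2
      + L\<^sup>2 * (\<integral>u. (norm u) ^ 4 \<partial>(std_gauss :: (real^'d) measure)) + B\<^sup>2)"
    unfolding Mart_sq_majorant_def
    using N1 N2 integrable_norm_pow4_U[of j] integral_U[of "\<lambda>u. (norm u) ^ 4" j]
    by (simp add: prob_space add_divide_distrib)
  also have "\<dots> \<le> 4 * (2 * (K * (\<integral>u. (norm u)\<^sup>2 \<partial>(std_gauss :: (real^'d) measure))) / (2 * lam)\<^sup>2
      + L\<^sup>2 * (\<integral>u. (norm u) ^ 4 \<partial>(std_gauss :: (real^'d) measure)) + B\<^sup>2)"
    using N1(2) N2(2) by (intro mult_left_mono add_right_mono divide_right_mono) auto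
  finally show "(\<integral>\<omega>. Mart_sq_majorant B j \<omega> \<partial>M) \<le> \<dots>" .
qed

lemma Mart_second_moment_bounded:
  obtains C where "\<And>j. integrable M (\<lambda>\<omega>. (norm (Mart (Suc j) \<omega>))\<^sup>2)"
    and "\<And>j. (\<integral>\<omega>. (norm (Mart (Suc j) \<omega>))\<^sup>2 \<partial>M) \<le> C"
proof -
  obtain B where B: "\<And>v. norm (smoothed_grad v) \<le> B" using smoothed_grad_bounded by blast
  have majorant: "AE \<omega> in M. (norm (Mart (Suc j) \<omega>))\<^sup>2 \<le> Mart_sq_majorant B j \<omega>" for j
    using Mart_AE_eq[of j] by eventually_elim (simp add: norm_g_minus_smoothed_grad_sq_le[OF B])
  have int: "integrable M (\<lambda>\<omega>. (norm (Mart (Suc j) \<omega>))\<^sup>2)" for j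
  proof (rule Bochner_Integration.integrable_bound[OF integrable_Mart_sq_majorant])
    show "AE \<omega> in M. norm ((norm (Mart (Suc j) \<omega>))\<^sup>2) \<le> norm (Mart_sq_majorant B j \<omega>)"
      using majorant[of j] by eventually_elim simp
  qed measurable
  have "(\<integral>\<omega>. (norm (Mart (Suc j) \<omega>))\<^sup>2 \<partial>M) \<le> (\<integral>\<omega>. Mart_sq_majorant B j \<omega> \<partial>M)" for j
    by (rule integral_mono_AE[OF int integrable_Mart_sq_majorant majorant])
  then show ?thesis
    by (rule that[OF int order_trans[OF _ integral_Mart_sq_majorant_le[of B]]])
qed

lemma AE_Cauchy_Mart_sums:
  assumes "summable (\<lambda>m. (\<alpha> m)\<^sup>2)"
  shows "AE \<omega> in M. Cauchy (\<lambda>n. \<Sum>m<n. \<alpha> m *\<^sub>R Mart (Suc m) \<omega>)"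
proof -
  obtain C where second_moment: "\<And>j. integrable M (\<lambda>\<omega>. (norm (Mart (Suc j) \<omega>))\<^sup>2)"
    and C: "\<And>j. (\<integral>\<omega>. (norm (Mart (Suc j) \<omega>))\<^sup>2 \<partial>M) \<le> C"
    using Mart_second_moment_bounded by blast
  interpret orthogonal_increments M "\<lambda>m \<omega>. \<alpha> m *\<^sub>R Mart (Suc m) \<omega>" hist
  proof
    show "subalgebra M (hist j)" for j by (rule subalgebra_hist)
    show "(\<lambda>\<omega>. \<alpha> m *\<^sub>R Mart (Suc m) \<omega>) \<in> borel_measurable (hist j)" if "m < j" for m j
      using Mart_hist[OF that] by measurable
    show "integrable M (\<lambda>\<omega>. (norm (\<alpha> m *\<^sub>R Mart (Suc m) \<omega>))\<^sup>2)" for m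
      using second_moment[of m] by (simp add: power_mult_distrib)
    show "(\<integral>\<omega>. inner (Z \<omega>) (\<alpha> j *\<^sub>R Mart (Suc j) \<omega>) \<partial>M) = 0"
      if "Z \<in> borel_measurable (hist j)" "integrable M (\<lambda>\<omega>. (norm (Z \<omega>))\<^sup>2)" for j Z
      using Mart_orthogonal_hist[OF that] by simp
  qed
  have "summable (\<lambda>m. \<integral>\<omega>. (norm (\<alpha> m *\<^sub>R Mart (Suc m) \<omega>))\<^sup>2 \<partial>M)"
  proof (rule summable_comparison_test)
    show "summable (\<lambda>m. C * (\<alpha> m)\<^sup>2)"
      using assms by (rule summable_mult)
    have "norm (\<integral>\<omega>. (norm (\<alpha> m *\<^sub>R Mart (Suc m) \<omega>))\<^sup>2 \<partial>M) \<le> C * (\<alpha> m)\<^sup>2" for m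
      using mult_left_mono[OF C[of m] zero_le_power2[of "\<alpha> m"]] by (simp add: power_mult_distrib mult.commute)
    then show "\<exists>N. \<forall>m\<ge>N. norm (\<integral>\<omega>. (norm (\<alpha> m *\<^sub>R Mart (Suc m) \<omega>))\<^sup>2 \<partial>M) \<le> C * (\<alpha> m)\<^sup>2"
      by blast
  qed
  then show ?thesis
    by (rule AE_Cauchy_psum[unfolded psum_def])
qed

end

theorem corollary2:
  fixes M :: "'a measure" and \<mu> :: "'z measure"
    and X :: "(real^'d) set"
    and F :: "real^'d \<Rightarrow> 'z \<Rightarrow> real" and f :: "real^'d \<Rightarrow> real"
    and K L lam :: real
    and x0 y0 :: "real^'d"
    and \<alpha> \<beta> :: "nat \<Rightarrow> real"
    and U x y :: "nat \<Rightarrow> 'a \<Rightarrow> real^'d"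
    and \<zeta>1 \<zeta>2 :: "nat \<Rightarrow> 'a \<Rightarrow> 'z"
    and N1 N2 :: "nat \<Rightarrow> 'a \<Rightarrow> real"
    and g Mart :: "nat \<Rightarrow> 'a \<Rightarrow> real^'d"
    and G Fs :: "nat \<Rightarrow> 'a measure"
  assumes M: "prob_space M" and mu: "prob_space \<mu>"
    and X: "X \<noteq> {}" "compact X" "convex X"
    and F_meas: "(\<lambda>(v, z). F v z) \<in> borel_measurable (borel \<Otimes>\<^sub>M \<mu>)"
    and F_int: "\<And>v. integrable \<mu> (F v)"
    and f_def: "\<And>v. f v = (\<integral>z. F v z \<partial>\<mu>)"
    and F_var: "\<And>v. integrable \<mu> (\<lambda>z. (F v z - f v)\<^sup>2) \<and> (\<integral>z. (F v z - f v)\<^sup>2 \<partial>\<mu>) \<le> K"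
    and f_lip: "L-lipschitz_on UNIV f"
    and f_clarke: "clarke_regular f"
    and lam: "lam > 0"
    and x0: "x0 \<in> X"
    and step0: "\<alpha> 0 < 1" "\<beta> 0 < 1"
    and step_dec: "\<And>n. \<alpha> n > \<alpha> (Suc n)" "\<And>n. \<beta> n > \<beta> (Suc n)"
    and step_div: "filterlim (\<lambda>n. \<Sum>i<n. \<alpha> i) at_top sequentially"
                  "filterlim (\<lambda>n. \<Sum>i<n. \<beta> i) at_top sequentially"
    and step_sq: "summable (\<lambda>n. (\<alpha> n)\<^sup>2 + (\<beta> n)\<^sup>2)"
    and step_ratio: "(\<lambda>n. \<alpha> n / \<beta> n) \<longlonglongrightarrow> 0"
    and U_meas: "\<And>n. U n \<in> borel_measurable M"
    and U_gauss: "\<And>n. distributed M lborel (U n) std_gauss_density"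
    and U_indep: "prob_space.indep_vars M (\<lambda>_. borel) U UNIV"
    and zeta_meas: "\<And>n. \<zeta>1 n \<in> measurable M \<mu>" "\<And>n. \<zeta>2 n \<in> measurable M \<mu>"
    and G_def: "\<And>n. G n = sigma (space M)
          ((\<Union>m\<in>{..n}. gen_sets M (x m) borel \<union> gen_sets M (U m) borel)
           \<union> (\<Union>m\<in>{..<n}. gen_sets M (\<zeta>1 m) \<mu> \<union> gen_sets M (\<zeta>2 m) \<mu>))"
    and N1_def: "\<And>n \<omega>. N1 (Suc n) \<omega> =
          F (x n \<omega> + lam *\<^sub>R U n \<omega>) (\<zeta>1 n \<omega>) - f (x n \<omega> + lam *\<^sub>R U n \<omega>)"
    and N2_def: "\<And>n \<omega>. N2 (Suc n) \<omega> =
          F (x n \<omega> - lam *\<^sub>R U n \<omega>) (\<zeta>2 n \<omega>) - f (x n \<omega> - lam *\<^sub>R U n \<omega>)"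
    and N1_mds: "\<And>n. integrable M (N1 (Suc n)) \<and> integrable M (\<lambda>\<omega>. (N1 (Suc n) \<omega>)\<^sup>2)
          \<and> (AE \<omega> in M. real_cond_exp M (G n) (N1 (Suc n)) \<omega> = 0)
          \<and> (AE \<omega> in M. real_cond_exp M (G n) (\<lambda>\<omega>. (N1 (Suc n) \<omega>)\<^sup>2) \<omega> \<le> K)"
    and N2_mds: "\<And>n. integrable M (N2 (Suc n)) \<and> integrable M (\<lambda>\<omega>. (N2 (Suc n) \<omega>)\<^sup>2)
          \<and> (AE \<omega> in M. real_cond_exp M (G n) (N2 (Suc n)) \<omega> = 0)
          \<and> (AE \<omega> in M. real_cond_exp M (G n) (\<lambda>\<omega>. (N2 (Suc n) \<omega>)\<^sup>2) \<omega> \<le> K)"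
    and U_indep_past: "\<And>n. prob_space.indep_set M
          (sigma_sets (space M) (gen_sets M (U n) borel))
          (sigma_sets (space M)
             ((\<Union>m\<in>{..n}. gen_sets M (x m) borel)
              \<union> (\<Union>m\<in>{..<n}. gen_sets M (U m) borel \<union> gen_sets M (\<zeta>1 m) \<mu> \<union> gen_sets M (\<zeta>2 m) \<mu>)))"
    and g_def: "\<And>n \<omega>. g n \<omega> =
          ((F (x n \<omega> + lam *\<^sub>R U n \<omega>) (\<zeta>1 n \<omega>) - F (x n \<omega> - lam *\<^sub>R U n \<omega>) (\<zeta>2 n \<omega>)) / (2 * lam))
          *\<^sub>R U n \<omega>"
    and y_init: "\<And>\<omega>. y 0 \<omega> = y0"
    and y_rec: "\<And>n \<omega>. y (Suc n) \<omega> = y n \<omega> + \<beta> n *\<^sub>R (g n \<omega> - y n \<omega>)"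
    and x_init: "\<And>\<omega>. x 0 \<omega> = x0"
    and x_rec: "\<And>n \<omega>. x (Suc n) \<omega> = closest_point X (x n \<omega> - \<alpha> n *\<^sub>R y n \<omega>)"
    and Fs_def: "\<And>n. Fs n = sigma (space M) (\<Union>k\<in>{1..n}. gen_sets M (x k) borel)"
    and Mart_def: "\<And>n \<omega>. Mart (Suc n) \<omega> =
          g n \<omega> - (\<chi> i. real_cond_exp M (Fs n) (\<lambda>\<omega>'. g n \<omega>' $ i) \<omega>)"
  shows "\<forall>T>0. AE \<omega> in M.
           ((\<lambda>n. SUP k\<in>{n..tau1 \<alpha> n T}. norm (\<Sum>m=n..k. \<alpha> m *\<^sub>R Mart (Suc m) \<omega>))
              \<longlongrightarrow> 0) sequentially"
proof -
  interpret zeroth_order_scheme M \<mu> X F f K L lam x0 y0 \<alpha> \<beta> U x y \<zeta>1 \<zeta>2 N1 N2 g Mart G Fs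
    by (rule zeroth_order_scheme.intro[OF M zeroth_order_scheme_axioms.intro])
       (fact compact_imp_closed[OF X(2)] assms)+
  have "summable (\<lambda>m. (\<alpha> m)\<^sup>2)"
    by (rule summable_comparison_test[OF _ step_sq]) auto
  then have Cauchy: "AE \<omega> in M. Cauchy (\<lambda>n. \<Sum>m<n. \<alpha> m *\<^sub>R Mart (Suc m) \<omega>)"
    by (rule AE_Cauchy_Mart_sums)
  show ?thesis
  proof (intro allI impI)
    fix T :: real
    from Cauchy show "AE \<omega> in M. ((\<lambda>n. SUP k\<in>{n..tau1 \<alpha> n T}. norm (\<Sum>m=n..k. \<alpha> m *\<^sub>R Mart (Suc m) \<omega>)) \<longlongrightarrow> 0) sequentially"
      by eventually_elim (rule Cauchy_imp_window_sums_LIMSEQ_0[OF _ tau1_ge[OF step_div(1)]])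
  qed
qed

end
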